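(* Let $P$ be a tree poset of height $h\le5$ and radius at most $2$, and let $x\in P$ be such that every element of $P$ is at distance at most $2$ from $x$ in the undirected Hasse diagram of $P$. Then for every $\varepsilon>0$ and every sufficiently large $n\in\mathbb N$, every family $\mathcal F\subseteq 2^{[n]}$ with $|\mathcal F|\ge 4(h-1+\varepsilon)\binom{n}{\lfloor n/2\rfloor}$ contains a copy of the blow-up $P(x,n^{1.9})$.
   Context: Posets are finite collections of finite sets ordered by inclusion. A poset homomorphism $\phi:P\to Q$ is a map with $A\subseteq B\Rightarrow \phi(A)\subseteq\phi(B)$; $Q$ contains a copy of $P$ if there is an injective poset homomorphism $P\to Q$. The Hasse diagram of $P$ is the directed graph on $P$ with an edge $A\to B$ when $A\subsetneq B$ and no $C\in P$ has $A\subsetneq C\subsetneq B$; the undirected Hasse diagram forgets orientations. A tree poset is a poset whose undirected Hasse diagram is a tree; radius at most $t$ means some element is at distance at most $t$ from all elements in the undirected Hasse diagram. The height is the number of elements of a longest chain. For a tree poset $P$, $x\in P$ and an integer $d\ge2$, the $d$-blow-up $P(x,d)$ rooted at $x$ is the tree poset whose Hasse diagram is obtained as follows: each $u\in P$ at distance $\rho$ from $x$ is replaced by $d^{\rho}$ elements $u^1,\dots,u^{d^\rho}$; for each edge $uv$ of the Hasse diagram with $v$ at distance $\rho-1$ from $x$ (and $u$ at distance $\rho$), the $u^i$ are partitioned into $d^{\rho-1}$ disjoint sets $U^1,\dots,U^{d^{\rho-1}}$ of size $d$ and $v^j$ is joined to every element of $U^j$, with the same orientation as the edge $uv$. The parameter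 $n^{1.9}$ is rounded down to an integer. *)

theory Defs
  imports Complex_Main
begin

text \<open>Posets are finite families of finite sets ordered by inclusion.\<close>

definition hasse_edge :: "'a set set \<Rightarrow> 'a set \<Rightarrow> 'a set \<Rightarrow> bool" where
  "hasse_edge P A B \<longleftrightarrow> A \<in> P \<and> B \<in> P \<and> A \<subset> B \<and> \<not> (\<exists>C\<in>P. A \<subset> C \<and> C \<subset> B)"

definition hasse_adj :: "'a set set \<Rightarrow> ('a set \<times> 'a set) set" where
  "hasse_adj P = {(A, B). hasse_edge P A B \<or> hasse_edge P B A}"

definition hasse_uedges :: "'a set set \<Rightarrow> 'a set set set" where
  "hasse_uedges P = {{A, B} | A B. hasse_edge P A B}"

definition hdist_le :: "'a set set \<Rightarrow> 'a set \<Rightarrow> 'a set \<Rightarrow> nat \<Rightarrow> bool" where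
  "hdist_le P A B k \<longleftrightarrow> (\<exists>j\<le>k. (A, B) \<in> hasse_adj P ^^ j)"

text \<open>Distance in the undirected Hasse diagram (meaningful for connected diagrams).\<close>
definition hdist :: "'a set set \<Rightarrow> 'a set \<Rightarrow> 'a set \<Rightarrow> nat" where
  "hdist P A B = (LEAST k. (A, B) \<in> hasse_adj P ^^ k)"

definition tree_poset :: "'a set set \<Rightarrow> bool" where
  "tree_poset P \<longleftrightarrow> P \<noteq> {} \<and> (\<forall>A\<in>P. \<forall>B\<in>P. (A, B) \<in> (hasse_adj P)\<^sup>*)
     \<and> card (hasse_uedges P) + 1 = card P"

definition radius_le :: "'a set set \<Rightarrow> nat \<Rightarrow> bool" where
  "radius_le P t \<longleftrightarrow> (\<exists>c\<in>P. \<forall>y\<in>P. hdist_le P c y t)"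

definition is_chain :: "'a set set \<Rightarrow> bool" where
  "is_chain C \<longleftrightarrow> (\<forall>A\<in>C. \<forall>B\<in>C. A \<subseteq> B \<or> B \<subseteq> A)"

definition height :: "'a set set \<Rightarrow> nat" where
  "height P = Max {card C | C. C \<subseteq> P \<and> is_chain C}"

text \<open>The d-blow-up P(x,d): element u at distance rho from x is replaced by the
  copies (u,i), i < d^rho.  For a Hasse edge between u (distance rho) and v
  (distance rho-1), the copies of u are partitioned into the blocks
  U^j = {(u,i) | i div d = j}, j < d^(rho-1), each of size d, and v^j is joined to
  every element of U^j, with the orientation of the edge uv.\<close>
definition blowup_elems :: "'a set set \<Rightarrow> 'a set \<Rightarrow> nat \<Rightarrow> ('a set \<times> nat) set" where
  "blowup_elems P x d = {(u, i). u \<in> P \<and> i < d ^ hdist P x u}"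

definition blowup_edge :: "'a set set \<Rightarrow> 'a set \<Rightarrow> nat \<Rightarrow> ('a set \<times> nat) \<Rightarrow> ('a set \<times> nat) \<Rightarrow> bool" where
  "blowup_edge P x d a b \<longleftrightarrow> a \<in> blowup_elems P x d \<and> b \<in> blowup_elems P x d \<and>
     hasse_edge P (fst a) (fst b) \<and>
     ((hdist P x (fst a) = hdist P x (fst b) + 1 \<and> snd a div d = snd b) \<or>
      (hdist P x (fst b) = hdist P x (fst a) + 1 \<and> snd b div d = snd a))"

definition blowup_le :: "'a set set \<Rightarrow> 'a set \<Rightarrow> nat \<Rightarrow> (('a set \<times> nat) \<times> ('a set \<times> nat)) set" where
  "blowup_le P x d = {(a, b). blowup_edge P x d a b}\<^sup>*"

definition contains_blowup :: "'b set set \<Rightarrow> 'a set set \<Rightarrow> 'a set \<Rightarrow> nat \<Rightarrow> bool" where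
  "contains_blowup F P x d \<longleftrightarrow> (\<exists>\<phi>. inj_on \<phi> (blowup_elems P x d) \<and>
     \<phi> ` blowup_elems P x d \<subseteq> F \<and>
     (\<forall>a\<in>blowup_elems P x d. \<forall>b\<in>blowup_elems P x d.
        (a, b) \<in> blowup_le P x d \<longrightarrow> \<phi> a \<subseteq> \<phi> b))"

end

theory Submission
  imports Defs "HOL-Combinatorics.Multiset_Permutations" "HOL-Real_Asymp.Real_Asymp"
begin

text \<open>Let \<open>a, b \<le> 2\<close> count the levels of \<open>P\<close> above and below \<open>x\<close>, so that \<open>1 + a + b \<le> h\<close>,
  and let \<open>K\<close> be the number of elements of the blow-up, so \<open>K \<le> |P| d^2 = O(n^3.8)\<close>.  Call
  \<open>X \<in> F\<close> a good root if \<open>X\<close> lies below \<open>K\<close> sets of \<open>F\<close> each of which lies above \<open>K\<close> sets of \<open>F\<close>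
  (and below \<open>K\<close> sets if \<open>a = 2\<close>), and dually above \<open>X\<close>.  From a good root the blow-up embeds
  greedily, level by level: every element has at least \<open>K\<close> candidate images, fewer than \<open>K\<close> of
  which are already used.

  If no member of \<open>F\<close> of size between \<open>n/4\<close> and \<open>3n/4\<close> is a good root, then on every maximal
  chain all but \<open>4(a + b)\<close> of these members lie within distance 8 of a bad pair of members four
  steps apart, i.e. a pair certifying that one of its sets has fewer than \<open>K\<close> suitable sets of \<open>F\<close>
  above or below it.  Weighting sets and pairs by the number of maximal chains through them, the
  bad pairs carry at most a \<open>2K / (n/4 choose 4) = O(n^-0.2)\<close> fraction of the LYM weight of \<open>F\<close>.
  Hence \<open>F\<close> has at most \<open>(4(a + b) + o(1)) (n choose n/2)\<close> balanced members, while there are only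
  \<open>o(n choose n/2)\<close> unbalanced sets.\<close>

section \<open>Rooted tree posets and their blow-ups\<close>

lemma hasse_adj_D:
  "(A, B) \<in> hasse_adj P \<Longrightarrow> A \<in> P \<and> B \<in> P \<and> (A \<subset> B \<or> B \<subset> A)"
  by (auto simp: hasse_adj_def hasse_edge_def)

lemma hasse_adj_uedge:
  assumes "(A, B) \<in> hasse_adj P"
  shows "{A, B} \<in> hasse_uedges P"
proof -
  have "hasse_edge P A B \<or> hasse_edge P B A" using assms unfolding hasse_adj_def by simp
  moreover have "{A, B} = {B, A}" by (rule insert_commute)
  ultimately show ?thesis unfolding hasse_uedges_def by blast
qed

lemma hdist_le_relpow: "(x, y) \<in> hasse_adj P ^^ k \<Longrightarrow> hdist P x y \<le> k"
  unfolding hdist_def by (rule Least_le)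

lemma hdist_self [simp]: "hdist P x x = 0"
  unfolding hdist_def by (rule Least_eq_0) simp

lemma hdist_le_2:
  assumes "hdist_le P x y 2"
  shows "hdist P x y \<le> 2"
  using assms hdist_le_relpow unfolding hdist_le_def by fastforce

locale rooted_tree_poset =
  fixes P :: "'a set set" and x :: "'a set"
  assumes finite_P: "finite P" and tree: "tree_poset P" and root_in: "x \<in> P"
begin

abbreviation depth :: "'a set \<Rightarrow> nat" where
  "depth \<equiv> hdist P x"

lemma relpow_depth:
  assumes "y \<in> P"
  shows "(x, y) \<in> hasse_adj P ^^ depth y"
proof -
  have "(x, y) \<in> (hasse_adj P)\<^sup>*" using tree root_in assms unfolding tree_poset_def by blast
  then obtain k where "(x, y) \<in> hasse_adj P ^^ k" using rtrancl_imp_relpow by blast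
  thus ?thesis unfolding hdist_def by (rule LeastI)
qed

lemma depth_eq_0_iff: "y \<in> P \<Longrightarrow> depth y = 0 \<longleftrightarrow> y = x"
  using relpow_depth by fastforce

lemma depth_adj_le:
  assumes "(v, y) \<in> hasse_adj P"
  shows "depth y \<le> depth v + 1"
proof -
  have "(x, v) \<in> hasse_adj P ^^ depth v" using relpow_depth hasse_adj_D[OF assms] by blast
  hence "(x, y) \<in> hasse_adj P ^^ Suc (depth v)" using assms by (rule relpow_Suc_I)
  thus ?thesis using hdist_le_relpow by fastforce
qed

definition parent :: "'a set \<Rightarrow> 'a set" where
  "parent y = (SOME v. (v, y) \<in> hasse_adj P \<and> depth v + 1 = depth y)"

lemma parent:
  assumes "y \<in> P" "y \<noteq> x"
  shows "(parent y, y) \<in> hasse_adj P" "depth (parent y) + 1 = depth y"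
proof -
  obtain k where k: "depth y = Suc k" using depth_eq_0_iff assms not0_implies_Suc by blast
  hence "(x, y) \<in> hasse_adj P ^^ Suc k" using relpow_depth[OF assms(1)] by simp
  then obtain v where v: "(x, v) \<in> hasse_adj P ^^ k" "(v, y) \<in> hasse_adj P"
    by (rule relpow_Suc_E)
  have "depth v + 1 = depth y"
    using hdist_le_relpow[OF v(1)] depth_adj_le[OF v(2)] k by linarith
  hence "\<exists>v. (v, y) \<in> hasse_adj P \<and> depth v + 1 = depth y" using v(2) by blast
  from someI_ex[OF this] show "(parent y, y) \<in> hasse_adj P" "depth (parent y) + 1 = depth y"
    unfolding parent_def by blast+
qed

lemma inj_on_parent_edge: "inj_on (\<lambda>y. {y, parent y}) (P - {x})"
proof (rule inj_onI)
  fix y y' assume y: "y \<in> P - {x}" "y' \<in> P - {x}" and eq: "{y, parent y} = {y', parent y'}"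
  from eq have "(y = y' \<and> parent y = parent y') \<or> (y = parent y' \<and> parent y = y')"
    unfolding doubleton_eq_iff .
  moreover have "\<not> (y = parent y' \<and> parent y = y')"
  proof
    assume swap: "y = parent y' \<and> parent y = y'"
    have e: "y = parent y'" "y' = parent y" using conjunct1[OF swap] conjunct2[OF swap, symmetric] .
    have "depth y + 1 = depth y'" unfolding e(1) using parent(2)[of y'] y by blast
    moreover have "depth y' + 1 = depth y" unfolding e(2) using parent(2)[of y] y by blast
    ultimately show False by linarith
  qed
  ultimately show "y = y'" by blast
qed

text \<open>The \<open>|P| - 1\<close> distinct edges \<open>{y, parent y}\<close> exhaust the edges of the tree.\<close>
lemma parent_edges: "(\<lambda>y. {y, parent y}) ` (P - {x}) = hasse_uedges P"
proof -
  have sub: "(\<lambda>y. {y, parent y}) ` (P - {x}) \<subseteq> hasse_uedges P"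
  proof (rule image_subsetI)
    fix y assume "y \<in> P - {x}"
    thus "{y, parent y} \<in> hasse_uedges P"
      using hasse_adj_uedge[OF parent(1)[of y]] insert_commute[of y "parent y" "{}"] by auto
  qed
  have "hasse_uedges P \<subseteq> Pow P" unfolding hasse_uedges_def hasse_edge_def by auto
  hence "finite (hasse_uedges P)" using finite_P by (simp add: finite_subset)
  moreover have "card (hasse_uedges P) + 1 = card P" using tree unfolding tree_poset_def by blast
  hence "card ((\<lambda>y. {y, parent y}) ` (P - {x})) = card (hasse_uedges P)"
    using card_image[OF inj_on_parent_edge] root_in finite_P by simp
  ultimately show ?thesis using sub by (simp add: card_subset_eq)
qed

lemma parent_unique:
  assumes "(v, y) \<in> hasse_adj P" "depth v + 1 = depth y"
  shows "v = parent y"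
proof -
  have "{y, v} \<in> hasse_uedges P"
    using hasse_adj_uedge[OF assms(1)] insert_commute[of y v "{}"] by argo
  then obtain y' where y': "y' \<in> P - {x}" "{y, v} = {y', parent y'}"
    unfolding parent_edges[symmetric] by blast
  hence "(y = y' \<and> v = parent y') \<or> (y = parent y' \<and> v = y')"
    unfolding doubleton_eq_iff by blast
  moreover have "\<not> (y = parent y' \<and> v = y')"
  proof
    assume "y = parent y' \<and> v = y'"
    hence "depth y + 1 = depth v" using parent(2)[of y'] y' by blast
    thus False using assms(2) by linarith
  qed
  ultimately show ?thesis by blast
qed

lemma parent_depth_1:
  assumes "y \<in> P" "depth y = 1"
  shows "parent y = x"
  using parent[of y] assms depth_eq_0_iff[of "parent y"] hasse_adj_D by fastforce

lemma finite_blowup_elems: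
  assumes "\<forall>y\<in>P. depth y \<le> 2" "1 \<le> d"
  shows "blowup_elems P x d \<subseteq> P \<times> {..<d ^ 2}" "finite (blowup_elems P x d)"
proof -
  have "d ^ depth u \<le> d ^ 2" if "u \<in> P" for u
    using assms that by (intro power_increasing) auto
  thus sub: "blowup_elems P x d \<subseteq> P \<times> {..<d ^ 2}"
    unfolding blowup_elems_def by fastforce
  show "finite (blowup_elems P x d)" by (rule finite_subset[OF sub]) (simp add: finite_P)
qed

lemma card_blowup_elems_le:
  assumes "\<forall>y\<in>P. depth y \<le> 2" "1 \<le> d"
  shows "card (blowup_elems P x d) \<le> card P * d ^ 2"
  using card_mono[OF _ finite_blowup_elems(1)[OF assms]] finite_P by (simp add: card_cartesian_product)

lemma blowup_parent_in:
  assumes "p \<in> blowup_elems P x d" "fst p \<noteq> x"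
  shows "(parent (fst p), snd p div d) \<in> blowup_elems P x d"
proof -
  have p: "fst p \<in> P" "snd p < d ^ depth (fst p)" using assms unfolding blowup_elems_def by auto
  moreover have "d ^ depth (fst p) = d ^ depth (parent (fst p)) * d"
    using parent(2)[OF p(1) assms(2)] by (metis Suc_eq_plus1 power_Suc2)
  ultimately have "snd p < d ^ depth (parent (fst p)) * d" by simp
  moreover have "parent (fst p) \<in> P" using parent(1)[OF p(1) assms(2)] hasse_adj_D by fast
  ultimately show ?thesis
    unfolding blowup_elems_def by (simp add: less_mult_imp_div_less)
qed

lemma blowup_edge_parent:
  assumes "blowup_edge P x d q r"
  shows "fst q \<subset> fst r \<and>
    ((fst q \<noteq> x \<and> r = (parent (fst q), snd q div d)) \<or>
     (fst r \<noteq> x \<and> q = (parent (fst r), snd r div d)))"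
proof -
  have e: "hasse_edge P (fst q) (fst r)" using assms unfolding blowup_edge_def by blast
  hence adj: "(fst q, fst r) \<in> hasse_adj P" "(fst r, fst q) \<in> hasse_adj P"
    unfolding hasse_adj_def by auto
  have "fst q \<in> P" "fst r \<in> P" and sub: "fst q \<subset> fst r" using e unfolding hasse_edge_def by auto
  have "(depth (fst q) = depth (fst r) + 1 \<and> snd q div d = snd r) \<or>
        (depth (fst r) = depth (fst q) + 1 \<and> snd r div d = snd q)"
    using assms unfolding blowup_edge_def by blast
  thus ?thesis
  proof
    assume h: "depth (fst q) = depth (fst r) + 1 \<and> snd q div d = snd r"
    hence "fst q \<noteq> x" by auto
    moreover have "fst r = parent (fst q)" using parent_unique adj(2) h by simp
    ultimately show ?thesis using sub h by (cases r) auto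
  next
    assume h: "depth (fst r) = depth (fst q) + 1 \<and> snd r div d = snd q"
    hence "fst r \<noteq> x" by auto
    moreover have "fst q = parent (fst r)" using parent_unique adj(1) h by simp
    ultimately show ?thesis using sub h by (cases q) auto
  qed
qed

end

section \<open>Levels above and below the root\<close>

definition levels_above :: "'a set set \<Rightarrow> 'a set \<Rightarrow> nat" where
  "levels_above P x =
    (if \<exists>u\<in>P. \<exists>w\<in>P. x \<subset> u \<and> u \<subset> w then 2 else if \<exists>u\<in>P. x \<subset> u then 1 else 0)"

definition levels_below :: "'a set set \<Rightarrow> 'a set \<Rightarrow> nat" where
  "levels_below P x =
    (if \<exists>u\<in>P. \<exists>w\<in>P. w \<subset> u \<and> u \<subset> x then 2 else if \<exists>u\<in>P. u \<subset> x then 1 else 0)"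

lemma chain_above:
  obtains U where "U \<subseteq> P" "\<forall>y\<in>U. x \<subset> y" "is_chain U" "card U = levels_above P x"
proof (cases "\<exists>u\<in>P. \<exists>w\<in>P. x \<subset> u \<and> u \<subset> w")
  case two: True
  then obtain u w where uw: "u \<in> P" "w \<in> P" "x \<subset> u" "u \<subset> w" by blast
  have "levels_above P x = 2" unfolding levels_above_def by (rule if_P[OF two])
  moreover have "card {u, w} = 2" "is_chain {u, w}" "x \<subset> w"
    using uw by (auto simp: is_chain_def)
  ultimately show ?thesis using that[of "{u, w}"] uw by auto
next
  case not_two: False
  show ?thesis
  proof (cases "\<exists>u\<in>P. x \<subset> u")
    case True
    then obtain u where "u \<in> P" "x \<subset> u" by blast
    moreover have "levels_above P x = 1"
      unfolding levels_above_def by (simp only: if_not_P[OF not_two] if_P[OF True])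
    ultimately show ?thesis using that[of "{u}"] by (simp add: is_chain_def)
  next
    case none: False
    have "levels_above P x = 0"
      unfolding levels_above_def by (simp only: if_not_P[OF not_two] if_not_P[OF none])
    thus ?thesis using that[of "{}"] by (simp add: is_chain_def)
  qed
qed

lemma chain_below:
  obtains D where "D \<subseteq> P" "\<forall>y\<in>D. y \<subset> x" "is_chain D" "card D = levels_below P x"
proof (cases "\<exists>u\<in>P. \<exists>w\<in>P. w \<subset> u \<and> u \<subset> x")
  case two: True
  then obtain u w where uw: "u \<in> P" "w \<in> P" "w \<subset> u" "u \<subset> x" by blast
  have "levels_below P x = 2" unfolding levels_below_def by (rule if_P[OF two])
  moreover have "card {u, w} = 2" "is_chain {u, w}" "w \<subset> x"
    using uw by (auto simp: is_chain_def)
  ultimately show ?thesis using that[of "{u, w}"] uw by auto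
next
  case not_two: False
  show ?thesis
  proof (cases "\<exists>u\<in>P. u \<subset> x")
    case True
    then obtain u where "u \<in> P" "u \<subset> x" by blast
    moreover have "levels_below P x = 1"
      unfolding levels_below_def by (simp only: if_not_P[OF not_two] if_P[OF True])
    ultimately show ?thesis using that[of "{u}"] by (simp add: is_chain_def)
  next
    case none: False
    have "levels_below P x = 0"
      unfolding levels_below_def by (simp only: if_not_P[OF not_two] if_not_P[OF none])
    thus ?thesis using that[of "{}"] by (simp add: is_chain_def)
  qed
qed

lemma is_chain_insert_Un:
  assumes "is_chain U" "is_chain D" "\<forall>y\<in>U. x \<subseteq> y" "\<forall>y\<in>D. y \<subseteq> x"
  shows "is_chain (insert x (U \<union> D))"
  unfolding is_chain_def
proof (intro ballI)
  fix A B assume "A \<in> insert x (U \<union> D)" "B \<in> insert x (U \<union> D)"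
  hence "A = x \<or> A \<in> U \<or> A \<in> D" "B = x \<or> B \<in> U \<or> B \<in> D" by auto
  thus "A \<subseteq> B \<or> B \<subseteq> A"
    by (elim disjE) (use assms in \<open>(simp add: is_chain_def; fail) | (meson order_trans)\<close>)+
qed

lemma height_ge:
  assumes "finite P" "C \<subseteq> P" "is_chain C"
  shows "card C \<le> height P"
proof -
  have "{card C | C. C \<subseteq> P \<and> is_chain C} \<subseteq> card ` Pow P" by auto
  hence "finite {card C | C. C \<subseteq> P \<and> is_chain C}"
    by (rule finite_subset) (simp add: assms(1))
  thus ?thesis unfolding height_def using assms(2,3) by (intro Max_ge) auto
qed

lemma levels_above_below_le_height:
  assumes "finite P" "x \<in> P"
  shows "1 + levels_above P x + levels_below P x \<le> height P"
proof -
  obtain U where U: "U \<subseteq> P" "\<forall>y\<in>U. x \<subset> y" "is_chain U" "card U = levels_above P x"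
    by (rule chain_above)
  obtain D where D: "D \<subseteq> P" "\<forall>y\<in>D. y \<subset> x" "is_chain D" "card D = levels_below P x"
    by (rule chain_below)
  have fin: "finite U" "finite D"
    using finite_subset[OF U(1) assms(1)] finite_subset[OF D(1) assms(1)] .
  have "U \<inter> D = {}" using U(2) D(2) less_not_sym by blast
  moreover have "x \<notin> U \<union> D" using U(2) D(2) by auto
  ultimately have "card (insert x (U \<union> D)) = 1 + levels_above P x + levels_below P x"
    using fin U(4) D(4) by (simp add: card_Un_disjoint)
  moreover have "is_chain (insert x (U \<union> D))"
    using U(2,3) D(2,3) by (intro is_chain_insert_Un) auto
  ultimately show ?thesis
    using height_ge[OF assms(1), of "insert x (U \<union> D)"] U(1) D(1) assms(2) by simp
qed

lemma levels_above_le_2: "levels_above P x \<le> 2"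
  by (simp add: levels_above_def)

lemma levels_below_le_2: "levels_below P x \<le> 2"
  by (simp add: levels_below_def)

lemma levels_above_pos: "u \<in> P \<Longrightarrow> x \<subset> u \<Longrightarrow> 1 \<le> levels_above P x"
  unfolding levels_above_def by auto

lemma levels_below_pos: "u \<in> P \<Longrightarrow> u \<subset> x \<Longrightarrow> 1 \<le> levels_below P x"
  unfolding levels_below_def by auto

lemma levels_above_eq_2: "u \<in> P \<Longrightarrow> w \<in> P \<Longrightarrow> x \<subset> u \<Longrightarrow> u \<subset> w \<Longrightarrow> levels_above P x = 2"
  unfolding levels_above_def by (rule if_P) blast

lemma levels_below_eq_2: "u \<in> P \<Longrightarrow> w \<in> P \<Longrightarrow> w \<subset> u \<Longrightarrow> u \<subset> x \<Longrightarrow> levels_below P x = 2"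
  unfolding levels_below_def by (rule if_P) blast

section \<open>Embedding the blow-up from a good root\<close>

lemma exists_inj_choice:
  assumes "finite I" "\<forall>i\<in>I. finite (C i) \<and> card I \<le> card (C i)"
  shows "\<exists>f. inj_on f I \<and> (\<forall>i\<in>I. f i \<in> C i)"
  using assms
proof (induction I rule: finite_induct)
  case (insert j I)
  have "\<forall>i\<in>I. finite (C i) \<and> card I \<le> card (C i)" using insert by auto
  then obtain f where f: "inj_on f I" "\<forall>i\<in>I. f i \<in> C i" using insert.IH by blast
  have "card (f ` I) < card (C j)"
    using insert card_image_le[OF insert.hyps(1), of f] by auto
  hence "\<not> C j \<subseteq> f ` I" using card_mono[OF finite_imageI[OF insert.hyps(1)]] by fastforce
  then obtain c where "c \<in> C j" "c \<notin> f ` I" by blast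
  hence "inj_on (f(j := c)) (insert j I) \<and> (\<forall>i\<in>insert j I. (f(j := c)) i \<in> C i)"
    using f insert.hyps(2) by (auto simp: inj_on_def)
  thus ?case by blast
qed simp

lemma exists_inj_choice_avoiding:
  assumes "finite I" "finite U" "\<forall>i\<in>I. finite (C i) \<and> card U + card I \<le> card (C i)"
  shows "\<exists>f. inj_on f I \<and> (\<forall>i\<in>I. f i \<in> C i \<and> f i \<notin> U)"
proof -
  have "finite (C i - U) \<and> card I \<le> card (C i - U)" if "i \<in> I" for i
    using assms(3) that diff_card_le_card_Diff[OF assms(2), of "C i"] by auto
  thus ?thesis using exists_inj_choice[OF assms(1), of "\<lambda>i. C i - U"] by blast
qed

definition up_rich :: "'b set set \<Rightarrow> nat \<Rightarrow> 'b set \<Rightarrow> bool" where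
  "up_rich F K A \<longleftrightarrow> K \<le> card {B\<in>F. A \<subset> B}"

definition down_rich :: "'b set set \<Rightarrow> nat \<Rightarrow> 'b set \<Rightarrow> bool" where
  "down_rich F K A \<longleftrightarrow> K \<le> card {B\<in>F. B \<subset> A}"

text \<open>Possible images of the depth-one elements \<open>v \<supset> x\<close>: a child \<open>u\<close> of \<open>v\<close> lies below \<open>v\<close>,
  or above it, and then \<open>x \<subset> v \<subset> u\<close> forces \<open>a = 2\<close>.\<close>
definition up_cands :: "'b set set \<Rightarrow> nat \<Rightarrow> nat \<Rightarrow> 'b set set" where
  "up_cands F K a = {B\<in>F. down_rich F K B \<and> (a = 2 \<longrightarrow> up_rich F K B)}"

definition down_cands :: "'b set set \<Rightarrow> nat \<Rightarrow> nat \<Rightarrow> 'b set set" where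
  "down_cands F K b = {B\<in>F. up_rich F K B \<and> (b = 2 \<longrightarrow> down_rich F K B)}"

definition good_root :: "'b set set \<Rightarrow> nat \<Rightarrow> nat \<Rightarrow> nat \<Rightarrow> 'b set \<Rightarrow> bool" where
  "good_root F K a b X \<longleftrightarrow> (1 \<le> a \<longrightarrow> K \<le> card {B\<in>up_cands F K a. X \<subset> B}) \<and>
                              (1 \<le> b \<longrightarrow> K \<le> card {B\<in>down_cands F K b. B \<subset> X})"

locale good_root_embedding = rooted_tree_poset P x for P :: "'a set set" and x +
  fixes F :: "'b set set" and d :: nat and X :: "'b set"
  assumes near: "\<forall>y\<in>P. depth y \<le> 2" and d: "1 \<le> d" and finite_F: "finite F" and X_in: "X \<in> F"
    and good: "good_root F (card (blowup_elems P x d)) (levels_above P x) (levels_below P x) X"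
begin

abbreviation K :: nat where
  "K \<equiv> card (blowup_elems P x d)"

definition level :: "nat \<Rightarrow> ('a set \<times> nat) set" where
  "level k = {p \<in> blowup_elems P x d. depth (fst p) = k}"

definition bparent :: "'a set \<times> nat \<Rightarrow> 'a set \<times> nat" where
  "bparent p = (parent (fst p), snd p div d)"

lemma blowup_elems_levels:
  "blowup_elems P x d = insert (x, 0) (level 1 \<union> level 2)"
  "(x, 0) \<notin> level 1 \<union> level 2" "level 1 \<inter> level 2 = {}"
proof -
  have "p = (x, 0)" if "p \<in> blowup_elems P x d" "depth (fst p) = 0" for p
    using that depth_eq_0_iff unfolding blowup_elems_def by auto
  moreover have "(x, 0) \<in> blowup_elems P x d" using root_in unfolding blowup_elems_def by simp
  ultimately show "blowup_elems P x d = insert (x, 0) (level 1 \<union> level 2)"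
    using near unfolding level_def blowup_elems_def by (fastforce simp: le_Suc_eq numeral_2_eq_2)
qed (auto simp: level_def)

lemma card_levels: "1 + card (level 1) + card (level 2) = K"
  using blowup_elems_levels finite_blowup_elems(2)[OF near d]
  by (simp add: card_Un_disjoint)

lemma level_D: "p \<in> level k \<Longrightarrow> fst p \<in> P \<and> snd p < d ^ k \<and> depth (fst p) = k"
  unfolding level_def blowup_elems_def by auto

lemma bparent_level_1:
  assumes "p \<in> level 1"
  shows "bparent p = (x, 0)"
  using level_D[OF assms] parent_depth_1 unfolding bparent_def by simp

lemma bparent_level_2:
  assumes "p \<in> level 2"
  shows "bparent p \<in> level 1"
proof -
  have p: "fst p \<in> P" "depth (fst p) = 2" using level_D[OF assms] by auto
  hence "fst p \<noteq> x" by auto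
  hence "bparent p \<in> blowup_elems P x d" "depth (parent (fst p)) = 1"
    using assms blowup_parent_in parent(2)[OF p(1)] p(2) unfolding level_def bparent_def by auto
  thus ?thesis unfolding level_def bparent_def by simp
qed

lemma level_1_adj: "p \<in> level 1 \<Longrightarrow> x \<subset> fst p \<or> fst p \<subset> x"
  using parent(1) parent_depth_1 hasse_adj_D unfolding level_def blowup_elems_def by fastforce

lemma parent_comparable: "p \<in> level 2 \<Longrightarrow> parent (fst p) \<subset> fst p \<or> fst p \<subset> parent (fst p)"
  using parent(1)[of "fst p"] depth_eq_0_iff hasse_adj_D unfolding level_def blowup_elems_def
  by fastforce

definition cands1 :: "'a set \<times> nat \<Rightarrow> 'b set set" where
  "cands1 p = (if x \<subset> fst p then {B\<in>up_cands F K (levels_above P x). X \<subset> B}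
               else {B\<in>down_cands F K (levels_below P x). B \<subset> X})"

lemma card_cands1:
  assumes p: "p \<in> level 1"
  shows "K \<le> card (cands1 p)"
proof (cases "x \<subset> fst p")
  case True
  thus ?thesis using good levels_above_pos[OF conjunct1[OF level_D[OF p]] True]
    unfolding good_root_def cands1_def by simp
next
  case False
  hence "fst p \<subset> x" using level_1_adj[OF p] by blast
  thus ?thesis using good levels_below_pos[OF conjunct1[OF level_D[OF p]]] False
    unfolding good_root_def cands1_def by simp
qed

definition emb1 :: "'a set \<times> nat \<Rightarrow> 'b set" where
  "emb1 = (SOME f. inj_on f (level 1) \<and> (\<forall>p\<in>level 1. f p \<in> cands1 p \<and> f p \<notin> {X}))"

lemma finite_level: "finite (level k)"
  using finite_blowup_elems(2)[OF near d] unfolding level_def by simp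

lemma emb1: "inj_on emb1 (level 1)" "\<And>p. p \<in> level 1 \<Longrightarrow> emb1 p \<in> cands1 p \<and> emb1 p \<noteq> X"
proof -
  have "finite (cands1 p)" for p
    using finite_F unfolding cands1_def up_cands_def down_cands_def by auto
  hence "\<forall>p\<in>level 1. finite (cands1 p) \<and> card {X} + card (level 1) \<le> card (cands1 p)"
    using card_cands1 card_levels by fastforce
  hence "\<exists>f. inj_on f (level 1) \<and> (\<forall>p\<in>level 1. f p \<in> cands1 p \<and> f p \<notin> {X})"
    by (intro exists_inj_choice_avoiding finite_level) simp_all
  from someI_ex[OF this]
  show "inj_on emb1 (level 1)" "\<And>p. p \<in> level 1 \<Longrightarrow> emb1 p \<in> cands1 p \<and> emb1 p \<noteq> X"
    unfolding emb1_def by auto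
qed

definition cands2 :: "'a set \<times> nat \<Rightarrow> 'b set set" where
  "cands2 p = (if parent (fst p) \<subset> fst p then {B\<in>F. emb1 (bparent p) \<subset> B}
               else {B\<in>F. B \<subset> emb1 (bparent p)})"

lemma card_cands2:
  assumes p: "p \<in> level 2"
  shows "K \<le> card (cands2 p)"
proof -
  let ?u = "fst p" and ?v = "parent (fst p)" and ?V = "emb1 (bparent p)"
  have q: "bparent p \<in> level 1" "fst (bparent p) = ?v"
    using bparent_level_2[OF p] bparent_def by auto
  have uv: "?u \<in> P" "?v \<in> P" using level_D[OF p] level_D[OF q(1)] q(2) by auto
  have V: "?V \<in> cands1 (bparent p)" using emb1(2)[OF q(1)] by blast
  show ?thesis
  proof (cases "x \<subset> ?v")
    case True
    hence up: "?V \<in> up_cands F K (levels_above P x)" using V q(2) unfolding cands1_def by simp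
    show ?thesis
    proof (cases "?v \<subset> ?u")
      case True
      hence "levels_above P x = 2" using levels_above_eq_2 uv \<open>x \<subset> ?v\<close> by blast
      thus ?thesis using up True unfolding cands2_def up_cands_def up_rich_def by simp
    next
      case False
      thus ?thesis using up unfolding cands2_def up_cands_def down_rich_def by simp
    qed
  next
    case False
    hence "?v \<subset> x" using level_1_adj[OF q(1)] q(2) by simp
    have down: "?V \<in> down_cands F K (levels_below P x)" using V q(2) False unfolding cands1_def by simp
    show ?thesis
    proof (cases "?v \<subset> ?u")
      case True
      thus ?thesis using down unfolding cands2_def down_cands_def up_rich_def by simp
    next
      case False
      hence "?u \<subset> ?v" using parent_comparable[OF p] by blast
      hence "levels_below P x = 2" using levels_below_eq_2 uv \<open>?v \<subset> x\<close> by blast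
      thus ?thesis using down False unfolding cands2_def down_cands_def down_rich_def by simp
    qed
  qed
qed

definition emb2 :: "'a set \<times> nat \<Rightarrow> 'b set" where
  "emb2 = (SOME f. inj_on f (level 2) \<and>
                   (\<forall>p\<in>level 2. f p \<in> cands2 p \<and> f p \<notin> insert X (emb1 ` level 1)))"

lemma emb2: "inj_on emb2 (level 2)"
  "\<And>p. p \<in> level 2 \<Longrightarrow> emb2 p \<in> cands2 p \<and> emb2 p \<notin> insert X (emb1 ` level 1)"
proof -
  have fin: "finite (cands2 p)" for p using finite_F unfolding cands2_def by simp
  have "card (insert X (emb1 ` level 1)) \<le> Suc (card (emb1 ` level 1))"
    using finite_level by (simp add: card_insert_if)
  also have "\<dots> \<le> Suc (card (level 1))" using card_image_le[OF finite_level] by simp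
  finally have "\<forall>p\<in>level 2. finite (cands2 p) \<and>
      card (insert X (emb1 ` level 1)) + card (level 2) \<le> card (cands2 p)"
    using card_cands2 card_levels fin by fastforce
  hence "\<exists>f. inj_on f (level 2) \<and> (\<forall>p\<in>level 2. f p \<in> cands2 p \<and> f p \<notin> insert X (emb1 ` level 1))"
    by (intro exists_inj_choice_avoiding finite_level) (simp_all add: finite_level)
  from someI_ex[OF this] show "inj_on emb2 (level 2)"
    "\<And>p. p \<in> level 2 \<Longrightarrow> emb2 p \<in> cands2 p \<and> emb2 p \<notin> insert X (emb1 ` level 1)"
    unfolding emb2_def by auto
qed

definition emb :: "'a set \<times> nat \<Rightarrow> 'b set" where
  "emb p = (if p \<in> level 1 then emb1 p else if p \<in> level 2 then emb2 p else X)"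

lemma emb_simps:
  "p \<in> level 1 \<Longrightarrow> emb p = emb1 p" "p \<in> level 2 \<Longrightarrow> emb p = emb2 p" "emb (x, 0) = X"
proof -
  show "p \<in> level 1 \<Longrightarrow> emb p = emb1 p" by (simp add: emb_def)
  show "p \<in> level 2 \<Longrightarrow> emb p = emb2 p"
  proof -
    assume "p \<in> level 2"
    moreover hence "p \<notin> level 1" using blowup_elems_levels(3) by blast
    ultimately show ?thesis by (simp add: emb_def)
  qed
  show "emb (x, 0) = X" using blowup_elems_levels(2) by (simp add: emb_def)
qed

lemma inj_on_emb: "inj_on emb (blowup_elems P x d)"
proof -
  have "inj_on emb (level 1) \<longleftrightarrow> inj_on emb1 (level 1)"
    "inj_on emb (level 2) \<longleftrightarrow> inj_on emb2 (level 2)"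
    by (rule inj_on_cong, erule emb_simps)+
  hence inj: "inj_on emb (level 1)" "inj_on emb (level 2)" using emb1(1) emb2(1) by simp_all
  have "emb ` level 1 = emb1 ` level 1" "emb ` level 2 = emb2 ` level 2"
    by (rule image_cong[OF refl], erule emb_simps)+
  moreover have "emb1 ` level 1 \<inter> emb2 ` level 2 = {}" "X \<notin> emb1 ` level 1" "X \<notin> emb2 ` level 2"
    using emb1(2) emb2(2) by blast+
  ultimately have disj: "emb ` level 1 \<inter> emb ` level 2 = {}" "X \<notin> emb ` (level 1 \<union> level 2)"
    by (simp_all add: image_Un)
  have "level 1 - level 2 = level 1" "level 2 - level 1 = level 2"
    "level 1 \<union> level 2 - {(x, 0)} = level 1 \<union> level 2"
    using blowup_elems_levels(2,3) by blast+
  thus ?thesis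
    using inj disj unfolding blowup_elems_levels(1) by (simp add: inj_on_Un emb_simps(3))
qed

lemma emb_in_F: "emb ` blowup_elems P x d \<subseteq> F"
proof -
  have "emb1 p \<in> F" if "p \<in> level 1" for p
    using emb1(2)[OF that] unfolding cands1_def up_cands_def down_cands_def
    by (cases "x \<subset> fst p") simp_all
  moreover have "emb2 p \<in> F" if "p \<in> level 2" for p
    using emb2(2)[OF that] unfolding cands2_def by (cases "parent (fst p) \<subset> fst p") simp_all
  ultimately show ?thesis using X_in emb_simps unfolding blowup_elems_levels(1) by auto
qed

lemma emb_child_parent:
  assumes "q \<in> blowup_elems P x d" "fst q \<noteq> x"
  shows "if parent (fst q) \<subset> fst q then emb (bparent q) \<subset> emb q else emb q \<subset> emb (bparent q)"
proof -
  have "q \<in> level 1 \<or> q \<in> level 2" using assms blowup_elems_levels(1) by auto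
  thus ?thesis
  proof
    assume q: "q \<in> level 1"
    hence "parent (fst q) = x" "emb (bparent q) = X" "emb q = emb1 q"
      using bparent_level_1[OF q] emb_simps unfolding bparent_def by auto
    thus ?thesis using emb1(2)[OF q] unfolding cands1_def by (cases "x \<subset> fst q") auto
  next
    assume q: "q \<in> level 2"
    hence "emb (bparent q) = emb1 (bparent q)" "emb q = emb2 q"
      using bparent_level_2[OF q] emb_simps by auto
    thus ?thesis using emb2(2)[OF q] unfolding cands2_def by (cases "parent (fst q) \<subset> fst q") auto
  qed
qed

lemma emb_mono_edge:
  assumes "blowup_edge P x d q r"
  shows "emb q \<subseteq> emb r"
proof -
  have in_BE: "q \<in> blowup_elems P x d" "r \<in> blowup_elems P x d"
    using assms unfolding blowup_edge_def by auto
  from blowup_edge_parent[OF assms] have sub: "fst q \<subset> fst r"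
    and "(fst q \<noteq> x \<and> r = bparent q) \<or> (fst r \<noteq> x \<and> q = bparent r)"
    unfolding bparent_def by auto
  thus ?thesis
  proof (elim disjE conjE)
    assume "fst q \<noteq> x" "r = bparent q"
    moreover have "\<not> parent (fst q) \<subset> fst q"
      using sub \<open>r = bparent q\<close> unfolding bparent_def by auto
    ultimately show ?thesis using emb_child_parent[OF in_BE(1)] by simp
  next
    assume "fst r \<noteq> x" "q = bparent r"
    moreover have "parent (fst r) \<subset> fst r"
      using sub \<open>q = bparent r\<close> unfolding bparent_def by auto
    ultimately show ?thesis using emb_child_parent[OF in_BE(2)] by simp
  qed
qed

lemma emb_mono:
  assumes "(p, q) \<in> blowup_le P x d"
  shows "emb p \<subseteq> emb q"
  using assms unfolding blowup_le_def
proof (induction rule: rtrancl_induct)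
  case (step q r)
  thus ?case using emb_mono_edge[of q r] by simp
qed simp

theorem contains_blowup: "contains_blowup F P x d"
  unfolding contains_blowup_def using inj_on_emb emb_in_F emb_mono by blast

end

section \<open>Counting maximal chains\<close>

lemma sum_card_filter_swap:
  assumes "finite X" "finite Y"
  shows "(\<Sum>x\<in>X. card {y\<in>Y. R x y}) = (\<Sum>y\<in>Y. card {x\<in>X. R x y})"
proof -
  have card_eq: "card {b\<in>B. Q b} = (\<Sum>b\<in>B. if Q b then 1 else 0)" if "finite B" for B :: "'c set" and Q
    using that by (simp add: sum.If_cases Int_def)
  have "(\<Sum>x\<in>X. card {y\<in>Y. R x y}) = (\<Sum>x\<in>X. \<Sum>y\<in>Y. if R x y then 1 else 0)"
    using assms(2) by (simp add: card_eq)
  also have "\<dots> = (\<Sum>y\<in>Y. \<Sum>x\<in>X. if R x y then 1 else 0)" by (rule sum.swap)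
  also have "\<dots> = (\<Sum>y\<in>Y. card {x\<in>X. R x y})"
    using assms(1) by (simp add: card_eq)
  finally show ?thesis .
qed

lemma card_permutations_split_prefix:
  assumes S: "finite S" and AS: "A \<subseteq> S"
  shows "card {xs \<in> permutations_of_set S. set (take (card A) xs) = A \<and> Q (drop (card A) xs)}
       = fact (card A) * card {zs \<in> permutations_of_set (S - A). Q zs}"
proof -
  let ?L = "{xs \<in> permutations_of_set S. set (take (card A) xs) = A \<and> Q (drop (card A) xs)}"
  let ?R = "permutations_of_set A \<times> {zs \<in> permutations_of_set (S - A). Q zs}"
  have "bij_betw (\<lambda>(ys, zs). ys @ zs) ?R ?L"
  proof (rule bij_betw_byWitness[where f' = "\<lambda>xs. (take (card A) xs, drop (card A) xs)"])
    show "\<forall>p\<in>?R. (\<lambda>xs. (take (card A) xs, drop (card A) xs)) ((\<lambda>(ys, zs). ys @ zs) p) = p"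
      using length_finite_permutations_of_set by fastforce
    show "(\<lambda>(ys, zs). ys @ zs) ` ?R \<subseteq> ?L"
      using length_finite_permutations_of_set AS by (fastforce simp: permutations_of_set_def)
    show "(\<lambda>xs. (take (card A) xs, drop (card A) xs)) ` ?L \<subseteq> ?R"
    proof (rule image_subsetI)
      fix xs assume "xs \<in> ?L"
      hence xs: "xs \<in> permutations_of_set S" "set (take (card A) xs) = A" "Q (drop (card A) xs)"
        by auto
      have "distinct xs" "set xs = S" using xs(1) by (auto simp: permutations_of_set_def)
      moreover have "set (take (card A) xs) \<union> set (drop (card A) xs) = set xs"
        by (metis append_take_drop_id set_append)
      moreover have "set (take (card A) xs) \<inter> set (drop (card A) xs) = {}"
        using \<open>distinct xs\<close> by (metis append_take_drop_id distinct_append)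
      ultimately show "(\<lambda>xs. (take (card A) xs, drop (card A) xs)) xs \<in> ?R"
        using xs by (auto simp: permutations_of_set_def)
    qed
  qed (auto simp: permutations_of_set_def)
  hence "card ?L = card ?R" by (rule bij_betw_same_card[symmetric])
  moreover have "finite A" using finite_subset[OF AS S] .
  ultimately show ?thesis by (simp add: card_cartesian_product)
qed

lemma card_permutations_prefix:
  assumes "finite S" "A \<subseteq> S"
  shows "card {xs \<in> permutations_of_set S. set (take (card A) xs) = A}
       = fact (card A) * fact (card S - card A)"
  using card_permutations_split_prefix[OF assms, where Q = "\<lambda>_. True"] assms
  by (simp add: card_Diff_subset finite_subset)

lemma set_take_extend_iff:
  assumes "distinct xs" "set (take (card A) xs) = A" "A \<subseteq> B" "finite B"
  shows "set (take (card B) xs) = B \<longleftrightarrow> set (take (card (B - A)) (drop (card A) xs)) = B - A"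
proof -
  let ?Y = "set (take (card (B - A)) (drop (card A) xs))"
  have "take (card B) xs = take (card A) xs @ take (card (B - A)) (drop (card A) xs)"
  proof -
    have "card B = card A + card (B - A)"
      using assms(3,4) by (simp add: card_Diff_subset card_mono finite_subset)
    thus ?thesis by (simp add: take_add)
  qed
  hence "set (take (card B) xs) = A \<union> ?Y" using assms(2) by simp
  moreover have "A \<inter> set (drop (card A) xs) = {}"
    using assms(1,2) by (metis append_take_drop_id distinct_append)
  hence "A \<inter> ?Y = {}" using set_take_subset[of "card (B - A)" "drop (card A) xs"] by blast
  ultimately show ?thesis using assms(3) by blast
qed

lemma card_permutations_two_prefixes:
  assumes S: "finite S" and AB: "A \<subseteq> B" and BS: "B \<subseteq> S"
  shows "card {xs \<in> permutations_of_set S. set (take (card A) xs) = A \<and> set (take (card B) xs) = B}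
       = fact (card A) * fact (card B - card A) * fact (card S - card B)"
proof -
  have fin: "finite B" "finite A"
    using finite_subset[OF BS S] finite_subset[OF AB finite_subset[OF BS S]] .
  have "{xs \<in> permutations_of_set S. set (take (card A) xs) = A \<and> set (take (card B) xs) = B}
     = {xs \<in> permutations_of_set S. set (take (card A) xs) = A \<and>
          set (take (card (B - A)) (drop (card A) xs)) = B - A}"
  proof (rule Collect_cong)
    fix xs
    show "(xs \<in> permutations_of_set S \<and> set (take (card A) xs) = A \<and> set (take (card B) xs) = B)
      \<longleftrightarrow> (xs \<in> permutations_of_set S \<and> set (take (card A) xs) = A \<and>
          set (take (card (B - A)) (drop (card A) xs)) = B - A)"
    proof (cases "xs \<in> permutations_of_set S \<and> set (take (card A) xs) = A")
      case True
      have "set (take (card B) xs) = B \<longleftrightarrow> set (take (card (B - A)) (drop (card A) xs)) = B - A"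
        using permutations_of_setD(2)[OF conjunct1[OF True]] conjunct2[OF True] AB fin(1)
        by (rule set_take_extend_iff)
      thus ?thesis by blast
    qed blast
  qed
  also have "card \<dots> = fact (card A) * card {zs \<in> permutations_of_set (S - A).
      set (take (card (B - A)) zs) = B - A}"
    by (rule card_permutations_split_prefix[OF S order_trans[OF AB BS],
          where Q = "\<lambda>zs. set (take (card (B - A)) zs) = B - A"])
  also have "\<dots> = fact (card A) * (fact (card (B - A)) * fact (card (S - A) - card (B - A)))"
    using card_permutations_prefix[of "S - A" "B - A"] S BS by auto
  also have "\<dots> = fact (card A) * (fact (card B - card A) * fact (card S - card B))"
  proof -
    have "card A \<le> card B" "card B \<le> card S" using AB BS S fin by (simp_all add: card_mono)
    thus ?thesis using AB BS fin by (simp add: card_Diff_subset finite_subset[OF _ S])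
  qed
  finally show ?thesis by (simp only: mult.assoc)
qed

lemma bij_betw_filter:
  assumes "bij_betw f A B"
  shows "bij_betw f {x\<in>A. P (f x)} {y\<in>B. P y}"
  using assms by (rule bij_betw_subset) (use assms in \<open>auto simp: bij_betw_def\<close>)

lemma card_set_take_permutation:
  assumes "xs \<in> permutations_of_set S" "k \<le> card S"
  shows "card (set (take k xs)) = k"
  using assms length_finite_permutations_of_set[OF assms(1)]
  by (simp add: distinct_card permutations_of_setD(2))

lemma bij_betw_prefix_sets:
  assumes xs: "xs \<in> permutations_of_set S"
  shows "bij_betw (\<lambda>k. set (take k xs)) {..card S} {A. set (take (card A) xs) = A}"
proof (rule bij_betw_byWitness[where f' = card])
  show "\<forall>k\<in>{..card S}. card (set (take k xs)) = k"
    using card_set_take_permutation[OF xs] by simp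
  thus "(\<lambda>k. set (take k xs)) ` {..card S} \<subseteq> {A. set (take (card A) xs) = A}" by auto
  have "card A \<le> card S" if "set (take (card A) xs) = A" for A
    using card_length[of "take (card A) xs"] length_finite_permutations_of_set[OF xs] that by simp
  thus "card ` {A. set (take (card A) xs) = A} \<subseteq> {..card S}" by auto
qed simp

lemma card_prefix_positions:
  assumes "xs \<in> permutations_of_set S"
  shows "card {k. k \<le> card S \<and> set (take k xs) \<in> D} = card {A \<in> D. set (take (card A) xs) = A}"
  using bij_betw_same_card[OF bij_betw_filter[OF bij_betw_prefix_sets[OF assms], of "\<lambda>A. A \<in> D"]]
  by (simp add: conj_commute)

lemma card_prefix_position_pairs:
  assumes "xs \<in> permutations_of_set S"
  shows "card {(k, k'). k \<le> card S \<and> k' \<le> card S \<and> (set (take k xs), set (take k' xs)) \<in> R}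
       = card {(A, B) \<in> R. set (take (card A) xs) = A \<and> set (take (card B) xs) = B}"
proof -
  let ?pre = "\<lambda>k. set (take k xs)"
  let ?Pfx = "{A. ?pre (card A) = A}"
  have "bij_betw (map_prod ?pre ?pre) ({..card S} \<times> {..card S}) (?Pfx \<times> ?Pfx)"
    by (intro bij_betw_map_prod bij_betw_prefix_sets[OF assms])
  from bij_betw_same_card[OF bij_betw_filter[OF this, of "\<lambda>p. p \<in> R"]]
  have "card {p \<in> {..card S} \<times> {..card S}. map_prod ?pre ?pre p \<in> R} = card {p \<in> ?Pfx \<times> ?Pfx. p \<in> R}" .
  moreover have "{p \<in> {..card S} \<times> {..card S}. map_prod ?pre ?pre p \<in> R}
      = {(k, k'). k \<le> card S \<and> k' \<le> card S \<and> (?pre k, ?pre k') \<in> R}" by auto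
  moreover have "{p \<in> ?Pfx \<times> ?Pfx. p \<in> R} = {(A, B) \<in> R. ?pre (card A) = A \<and> ?pre (card B) = B}"
    by auto
  ultimately show ?thesis by simp
qed

lemma sum_card_prefixes:
  assumes S: "finite S" and G: "G \<subseteq> Pow S"
  shows "(\<Sum>xs\<in>permutations_of_set S. card {k. k \<le> card S \<and> set (take k xs) \<in> G})
       = (\<Sum>A\<in>G. fact (card A) * fact (card S - card A))"
proof -
  have "finite G" using G S by (meson finite_Pow_iff finite_subset)
  have "(\<Sum>xs\<in>permutations_of_set S. card {k. k \<le> card S \<and> set (take k xs) \<in> G})
      = (\<Sum>xs\<in>permutations_of_set S. card {A \<in> G. set (take (card A) xs) = A})"
    by (intro sum.cong refl card_prefix_positions)
  also have "\<dots> = (\<Sum>A\<in>G. card {xs \<in> permutations_of_set S. set (take (card A) xs) = A})"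
    using \<open>finite G\<close> by (intro sum_card_filter_swap) simp_all
  also have "\<dots> = (\<Sum>A\<in>G. fact (card A) * fact (card S - card A))"
    using G S by (intro sum.cong refl card_permutations_prefix) auto
  finally show ?thesis .
qed

lemma sum_card_prefix_pairs:
  assumes S: "finite S" and R: "R \<subseteq> {(A, B). A \<subseteq> B \<and> B \<subseteq> S}"
  shows "(\<Sum>xs\<in>permutations_of_set S.
          card {(k, k'). k \<le> card S \<and> k' \<le> card S \<and> (set (take k xs), set (take k' xs)) \<in> R})
       = (\<Sum>(A, B)\<in>R. fact (card A) * fact (card B - card A) * fact (card S - card B))"
proof -
  have "finite R"
    using finite_subset[OF _ finite_cartesian_product[OF finite_Pow_iff[THEN iffD2, OF S]
          finite_Pow_iff[THEN iffD2, OF S]], of R] R by auto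
  have "(\<Sum>xs\<in>permutations_of_set S.
          card {(k, k'). k \<le> card S \<and> k' \<le> card S \<and> (set (take k xs), set (take k' xs)) \<in> R})
      = (\<Sum>xs\<in>permutations_of_set S.
          card {(A, B) \<in> R. set (take (card A) xs) = A \<and> set (take (card B) xs) = B})"
    by (intro sum.cong refl card_prefix_position_pairs)
  also have "\<dots> = (\<Sum>xs\<in>permutations_of_set S. card {p \<in> R.
          case p of (A, B) \<Rightarrow> set (take (card A) xs) = A \<and> set (take (card B) xs) = B})"
    by (intro sum.cong refl arg_cong[where f = card]) auto
  also have "\<dots> = (\<Sum>p\<in>R. card {xs \<in> permutations_of_set S.
          case p of (A, B) \<Rightarrow> set (take (card A) xs) = A \<and> set (take (card B) xs) = B})"
    using \<open>finite R\<close> by (intro sum_card_filter_swap) simp_all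
  also have "\<dots> = (\<Sum>(A, B)\<in>R. fact (card A) * fact (card B - card A) * fact (card S - card B))"
  proof (rule sum.cong[OF refl], clarify)
    fix A B assume "(A, B) \<in> R"
    thus "card {xs \<in> permutations_of_set S. set (take (card A) xs) = A \<and> set (take (card B) xs) = B}
        = fact (card A) * fact (card B - card A) * fact (card S - card B)"
      using R by (intro card_permutations_two_prefixes S) auto
  qed
  finally show ?thesis .
qed

section \<open>Binomial estimates\<close>

lemma binomial_double_le:
  assumes "3 * i + 2 \<le> n"
  shows "2 * (n choose i) \<le> n choose Suc i"
proof -
  have "2 * Suc i \<le> n - i" using assms by arith
  hence "(2 * Suc i) * (n choose i) \<le> (n - i) * (n choose i)" by (rule mult_right_mono) simp
  hence "Suc i * (2 * (n choose i)) \<le> (n - i) * (n choose i)" by (simp add: algebra_simps)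
  also have "\<dots> = Suc i * (n choose Suc i)"
    using binomial_absorption[of i n] binomial_absorb_comp[of n i] by simp
  finally show ?thesis by (simp only: mult_le_cancel1)
qed

lemma binomial_pow2_le:
  "k + j \<le> n div 3 \<Longrightarrow> 2 ^ j * (n choose k) \<le> n choose (k + j)"
proof (induction j)
  case (Suc j)
  have "2 * (2 ^ j * (n choose k)) \<le> 2 * (n choose (k + j))" using Suc by simp
  also have "\<dots> \<le> n choose Suc (k + j)"
  proof (rule binomial_double_le)
    have "3 * (k + j) + 2 \<le> 3 * (n div 3)" using Suc.prems by simp
    also have "\<dots> \<le> n" by simp
    finally show "3 * (k + j) + 2 \<le> n" .
  qed
  finally show ?case by simp
qed simp

lemma binomial_tail_le:
  assumes "4 * k < n \<or> (3 * n < 4 * k \<and> k \<le> n)"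
  shows "2 ^ (n div 3 - n div 4) * (n choose k) \<le> n choose (n div 2)"
proof -
  have low: "2 ^ (n div 3 - n div 4) * (n choose k') \<le> n choose (n div 2)" if "4 * k' < n" for k'
  proof -
    have "2 ^ (n div 3 - n div 4) * (n choose k') \<le> 2 ^ (n div 3 - k') * (n choose k')"
      using that by (intro mult_right_mono power_increasing) auto
    also have "\<dots> \<le> n choose (k' + (n div 3 - k'))"
      using that by (intro binomial_pow2_le) linarith
    also have "\<dots> \<le> n choose (n div 2)" by (rule binomial_maximum)
    finally show ?thesis .
  qed
  from assms show ?thesis
  proof
    assume "3 * n < 4 * k \<and> k \<le> n"
    thus ?thesis using low[of "n - k"] binomial_symmetric[of k n] by fastforce
  qed (rule low)
qed

definition unbalanced_sets :: "nat \<Rightarrow> nat set set" where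
  "unbalanced_sets n = {A. A \<subseteq> {1..n} \<and> \<not> (n \<le> 4 * card A \<and> 4 * card A \<le> 3 * n)}"

lemma card_unbalanced_sets_le:
  "2 ^ (n div 3 - n div 4) * card (unbalanced_sets n) \<le> (n + 1) * (n choose (n div 2))"
proof -
  let ?I = "{k. k \<le> n \<and> \<not> (n \<le> 4 * k \<and> 4 * k \<le> 3 * n)}"
  have "card A \<le> n" if "A \<subseteq> {1..n}" for A
    using card_mono[OF _ that] by simp
  hence "unbalanced_sets n = (\<Union>k\<in>?I. {A. A \<subseteq> {1..n} \<and> card A = k})"
    unfolding unbalanced_sets_def by blast
  hence "card (unbalanced_sets n) \<le> (\<Sum>k\<in>?I. card {A. A \<subseteq> {1..n} \<and> card A = k})"
    by (simp add: card_UN_le)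
  hence "2 ^ (n div 3 - n div 4) * card (unbalanced_sets n)
      \<le> (\<Sum>k\<in>?I. 2 ^ (n div 3 - n div 4) * (n choose k))"
    by (simp add: n_subsets sum_distrib_left[symmetric])
  also have "\<dots> \<le> (\<Sum>k\<in>?I. n choose (n div 2))"
    by (intro sum_mono binomial_tail_le) auto
  also have "\<dots> = card ?I * (n choose (n div 2))" by simp
  also have "\<dots> \<le> (n + 1) * (n choose (n div 2))"
    using card_mono[of "{..n}" ?I] by (intro mult_right_mono) auto
  finally show ?thesis .
qed

lemma eventually_linear_le_pow2:
  assumes "e > 0"
  shows "eventually (\<lambda>n. real (n + 1) \<le> e * 2 ^ (n div 3 - n div 4)) sequentially"
proof -
  have "(\<lambda>n::nat. (real n + 1) / 2 powr (real n / 12 - 1)) \<longlonglongrightarrow> 0" by real_asymp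
  hence "eventually (\<lambda>n. (real n + 1) / 2 powr (real n / 12 - 1) < e) sequentially"
    using assms by (rule order_tendstoD)
  thus ?thesis
  proof (rule eventually_mono)
    fix n :: nat assume h: "(real n + 1) / 2 powr (real n / 12 - 1) < e"
    have "real n / 3 - 1 \<le> real (n div 3)" "real (n div 4) \<le> real n / 4" by linarith+
    hence "real n / 12 - 1 \<le> real (n div 3 - n div 4)"
      using div_le_mono2[of 3 4 n] by (simp add: of_nat_diff)
    hence "2 powr (real n / 12 - 1) \<le> 2 powr real (n div 3 - n div 4)" by (intro powr_mono) auto
    also have "\<dots> = 2 ^ (n div 3 - n div 4)" by (rule powr_realpow) simp
    finally have "e * 2 powr (real n / 12 - 1) \<le> e * 2 ^ (n div 3 - n div 4)"
      using assms by (intro mult_left_mono) auto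
    moreover have "real n + 1 < e * 2 powr (real n / 12 - 1)"
      using h by (simp add: divide_less_eq)
    ultimately show "real (n + 1) \<le> e * 2 ^ (n div 3 - n div 4)" by simp
  qed
qed

lemma choose_4_ge:
  assumes "4 \<le> m"
  shows "(real m / 4) ^ 4 \<le> real (m choose 4)"
  using gbinomial_ge_n_over_k_pow_k[of 4 "real m"] assms by (simp add: binomial_gbinomial)

lemma eventually_powr_le_choose_4:
  assumes "e > 0"
  shows "eventually (\<lambda>n. c * (real n powr 1.9) ^ 2 \<le> e * real ((n div 4) choose 4)) sequentially"
proof -
  have "(\<lambda>n::nat. \<bar>c\<bar> * ((real n powr 1.9) ^ 2 / ((real n / 4 - 1) / 4) ^ 4)) \<longlonglongrightarrow> 0"
    by real_asymp
  hence "eventually (\<lambda>n. \<bar>c\<bar> * ((real n powr 1.9) ^ 2 / ((real n / 4 - 1) / 4) ^ 4) < e) sequentially"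
    using assms by (rule order_tendstoD)
  thus ?thesis using eventually_ge_at_top[of 32]
  proof eventually_elim
    case (elim n)
    define q where "q = ((real n / 4 - 1) / 4) ^ 4"
    have q: "q > 0" using elim(2) by (simp add: q_def)
    have "real n / 4 - 1 \<le> real (n div 4)" by linarith
    hence "q \<le> (real (n div 4) / 4) ^ 4"
      unfolding q_def using elim(2) by (intro power_mono divide_right_mono) auto
    also have "\<dots> \<le> real ((n div 4) choose 4)" using elim(2) by (intro choose_4_ge) linarith
    finally have qM: "q \<le> real ((n div 4) choose 4)" .
    have "c * (real n powr 1.9) ^ 2 \<le> (\<bar>c\<bar> * ((real n powr 1.9) ^ 2 / q)) * q"
      using q by (simp add: mult_right_mono)
    also have "\<dots> \<le> e * q" using elim(1) q unfolding q_def by (intro mult_right_mono) auto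
    also have "\<dots> \<le> e * real ((n div 4) choose 4)" using qM assms by simp
    finally show ?case .
  qed
qed

lemma choose_4_mult_fact_le:
  assumes "4 \<le> g" "4 \<le> r" "m \<le> r"
  shows "(m choose 4) * (fact g * fact r) \<le> fact (g + r)"
proof -
  have "m choose 4 \<le> (g + r) choose 4" using assms by (simp add: binomial_right_mono)
  also have "\<dots> \<le> (g + r) choose g"
    using assms binomial_mono[of 4 g "g + r"] binomial_mono[of 4 r "g + r"]
      binomial_symmetric[of g "g + r"] by (cases "g \<le> r") auto
  finally have "(m choose 4) * (fact g * fact r) \<le> ((g + r) choose g) * (fact g * fact r)"
    by (rule mult_right_mono) simp
  also have "\<dots> = fact (g + r)"
    using binomial_fact_lemma[of g "g + r"] by (simp add: algebra_simps)
  finally show ?thesis .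
qed

section \<open>Bad pairs\<close>

text \<open>A bad pair certifies that its lower end cannot serve upwards, or its upper end downwards,
  in an embedding from a good root.\<close>
definition bad_above :: "'b set set \<Rightarrow> nat \<Rightarrow> nat \<Rightarrow> 'b set \<Rightarrow> 'b set \<Rightarrow> bool" where
  "bad_above F K a A B \<longleftrightarrow>
     \<not> up_rich F K A \<or> (B \<in> up_cands F K a \<and> card {C\<in>up_cands F K a. A \<subset> C} < K)"

definition bad_below :: "'b set set \<Rightarrow> nat \<Rightarrow> nat \<Rightarrow> 'b set \<Rightarrow> 'b set \<Rightarrow> bool" where
  "bad_below F K b A B \<longleftrightarrow>
     \<not> down_rich F K B \<or> (A \<in> down_cands F K b \<and> card {C\<in>down_cands F K b. C \<subset> B} < K)"

definition bad_pairs :: "'b set set \<Rightarrow> nat \<Rightarrow> nat \<Rightarrow> nat \<Rightarrow> 'b set set \<Rightarrow> ('b set \<times> 'b set) set" where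
  "bad_pairs F K a b G = {(A, B). A \<in> G \<and> B \<in> G \<and> A \<subset> B \<and> card A + 4 \<le> card B \<and>
                                  (bad_above F K a A B \<or> bad_below F K b A B)}"

lemma card_bad_above_le:
  assumes "finite F"
  shows "card {B\<in>F. A \<subset> B \<and> bad_above F K a A B} \<le> K"
proof (cases "up_rich F K A")
  case True
  show ?thesis
  proof (cases "card {C\<in>up_cands F K a. A \<subset> C} < K")
    case small: True
    have "{B\<in>F. A \<subset> B \<and> bad_above F K a A B} \<subseteq> {C\<in>up_cands F K a. A \<subset> C}"
      using True unfolding bad_above_def by blast
    hence "card {B\<in>F. A \<subset> B \<and> bad_above F K a A B} \<le> card {C\<in>up_cands F K a. A \<subset> C}"
      by (rule card_mono[rotated]) (simp add: assms up_cands_def)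
    thus ?thesis using small by simp
  next
    case False
    hence empty: "{B\<in>F. A \<subset> B \<and> bad_above F K a A B} = {}"
      using True unfolding bad_above_def by blast
    show ?thesis unfolding empty by simp
  qed
next
  case False
  have "card {B\<in>F. A \<subset> B \<and> bad_above F K a A B} \<le> card {B\<in>F. A \<subset> B}"
    by (rule card_mono) (auto simp: assms)
  thus ?thesis using False unfolding up_rich_def by simp
qed

lemma card_bad_below_le:
  assumes "finite F"
  shows "card {A\<in>F. A \<subset> B \<and> bad_below F K b A B} \<le> K"
proof (cases "down_rich F K B")
  case True
  show ?thesis
  proof (cases "card {C\<in>down_cands F K b. C \<subset> B} < K")
    case small: True
    have "{A\<in>F. A \<subset> B \<and> bad_below F K b A B} \<subseteq> {C\<in>down_cands F K b. C \<subset> B}"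
      using True unfolding bad_below_def by blast
    hence "card {A\<in>F. A \<subset> B \<and> bad_below F K b A B} \<le> card {C\<in>down_cands F K b. C \<subset> B}"
      by (rule card_mono[rotated]) (simp add: assms down_cands_def)
    thus ?thesis using small by simp
  next
    case False
    hence empty: "{A\<in>F. A \<subset> B \<and> bad_below F K b A B} = {}"
      using True unfolding bad_below_def by blast
    show ?thesis unfolding empty by simp
  qed
next
  case False
  have "card {A\<in>F. A \<subset> B \<and> bad_below F K b A B} \<le> card {A\<in>F. A \<subset> B}"
    by (rule card_mono) (auto simp: assms)
  thus ?thesis using False unfolding down_rich_def by simp
qed

lemma card_interval_le_near:
  assumes "finite I"
    and near: "\<And>j. 4 * b \<le> j \<Longrightarrow> j + 4 * a < t \<Longrightarrow> \<exists>i\<in>I. j = i \<or> j + 4 = i \<or> j = i + 4 \<or> j = i + 8"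
  shows "t \<le> 4 * (a + b) + 4 * card I"
proof -
  let ?N = "\<lambda>i. {i, i - 4, i + 4, i + 8}"
  have "{4 * b..<t - 4 * a} \<subseteq> (\<Union>i\<in>I. ?N i)"
  proof
    fix j assume "j \<in> {4 * b..<t - 4 * a}"
    hence "4 * b \<le> j" "j + 4 * a < t" by auto
    then obtain i where "i \<in> I" "j = i \<or> j + 4 = i \<or> j = i + 4 \<or> j = i + 8" using near by blast
    moreover from this(2) have "j \<in> ?N i" by auto
    ultimately show "j \<in> (\<Union>i\<in>I. ?N i)" by blast
  qed
  hence "card {4 * b..<t - 4 * a} \<le> card (\<Union>i\<in>I. ?N i)"
    using assms(1) by (intro card_mono) auto
  also have "\<dots> \<le> (\<Sum>i\<in>I. card (?N i))" by (rule card_UN_le[OF assms(1)])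
  also have "\<dots> \<le> (\<Sum>i\<in>I. 4)"
  proof (rule sum_mono)
    fix i :: nat
    show "card (?N i) \<le> 4"
      using card_insert_le_m1[of 4 "{i - 4, i + 4, i + 8}"] card_insert_le_m1[of 3 "{i + 4, i + 8}"]
        card_insert_le_m1[of 2 "{i + 8}"] by simp
  qed
  finally show ?thesis by simp
qed

lemma not_good_root_bad_pair_near:
  assumes G: "G \<subseteq> F" and sG: "\<And>i. i < t \<Longrightarrow> s i \<in> G"
    and smono: "\<And>i i'. i < i' \<Longrightarrow> i' < t \<Longrightarrow> s i \<subset> s i' \<and> card (s i) + (i' - i) \<le> card (s i')"
    and not_good: "\<not> good_root F K a b (s j)" and a: "a \<le> 2" and b: "b \<le> 2"
    and j: "4 * b \<le> j" "j + 4 * a < t"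
  shows "\<exists>i. i + 4 < t \<and> (s i, s (i + 4)) \<in> bad_pairs F K a b G \<and>
             (j = i \<or> j + 4 = i \<or> j = i + 4 \<or> j = i + 8)"
proof -
  have bad: "(s i, s (i + 4)) \<in> bad_pairs F K a b G"
    if "i + 4 < t" "bad_above F K a (s i) (s (i + 4)) \<or> bad_below F K b (s i) (s (i + 4))" for i
    using that sG smono[of i "i + 4"] unfolding bad_pairs_def by auto
  from not_good consider (up) "1 \<le> a" "card {B\<in>up_cands F K a. s j \<subset> B} < K"
    | (down) "1 \<le> b" "card {B\<in>down_cands F K b. B \<subset> s j} < K"
    unfolding good_root_def by linarith
  thus ?thesis
  proof cases
    case up
    have j4: "j + 4 < t" "s (j + 4) \<in> F" using up j sG G by auto
    consider "bad_above F K a (s j) (s (j + 4)) \<or> bad_below F K b (s j) (s (j + 4))"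
      | "a = 2" "bad_above F K a (s (j + 4)) (s (j + 4 + 4))"
      using up j4(2) unfolding bad_above_def bad_below_def up_cands_def by auto
    thus ?thesis
    proof cases
      case 1
      thus ?thesis using bad[OF j4(1)] j4(1) by blast
    next
      case 2
      hence j8: "j + 4 + 4 < t" using j by linarith
      have "(s (j + 4), s (j + 4 + 4)) \<in> bad_pairs F K a b G" using bad[OF j8] 2 by blast
      thus ?thesis using j8 by (intro exI[of _ "j + 4"]) auto
    qed
  next
    case down
    define i where "i = j - 4"
    have ij: "j = i + 4" "i + 4 < t" "s i \<in> F" using down j sG G unfolding i_def by auto
    consider "bad_above F K a (s i) (s (i + 4)) \<or> bad_below F K b (s i) (s (i + 4))"
      | "b = 2" "bad_below F K b (s (j - 8)) (s i)"
      using down ij unfolding bad_above_def bad_below_def down_cands_def by auto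
    thus ?thesis
    proof cases
      case 1
      thus ?thesis using bad[OF ij(2)] ij by blast
    next
      case 2
      hence i8: "j - 8 + 4 = i" "j - 8 + 4 < t" using j ij by linarith+
      have "(s (j - 8), s (j - 8 + 4)) \<in> bad_pairs F K a b G" using bad[OF i8(2)] 2 i8(1) by simp
      thus ?thesis using i8 ij(1) by (intro exI[of _ "j - 8"]) auto
    qed
  qed
qed

lemma sorted_wrt_less_nth_add_le:
  fixes ks :: "nat list"
  assumes "sorted_wrt (<) ks" "i \<le> j" "j < length ks"
  shows "ks ! i + (j - i) \<le> ks ! j"
  using assms(2,3)
proof (induction j)
  case (Suc j)
  show ?case
  proof (cases "i = Suc j")
    case False
    hence "ks ! i + (j - i) \<le> ks ! j" using Suc by simp
    moreover have "ks ! j < ks ! Suc j" using assms(1) Suc.prems(2) by (simp add: sorted_wrt_nth_less)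
    ultimately show ?thesis using False Suc.prems(1) by linarith
  qed simp
qed simp

lemma chain_length_le_bad_pairs:
  assumes G: "G \<subseteq> F" and sG: "\<And>i. i < t \<Longrightarrow> s i \<in> G"
    and smono: "\<And>i i'. i < i' \<Longrightarrow> i' < t \<Longrightarrow> s i \<subset> s i' \<and> card (s i) + (i' - i) \<le> card (s i')"
    and not_good: "\<forall>X\<in>G. \<not> good_root F K a b X" and a: "a \<le> 2" and b: "b \<le> 2"
  shows "t \<le> 4 * (a + b) + 4 * card {i. i + 4 < t \<and> (s i, s (i + 4)) \<in> bad_pairs F K a b G}"
proof (rule card_interval_le_near)
  show "finite {i. i + 4 < t \<and> (s i, s (i + 4)) \<in> bad_pairs F K a b G}"
    by (rule finite_subset[of _ "{..<t}"]) auto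
next
  fix j assume j: "4 * b \<le> j" "j + 4 * a < t"
  hence "\<not> good_root F K a b (s j)" using not_good sG[of j] by simp
  from not_good_root_bad_pair_near[OF G sG smono this a b j]
  show "\<exists>i\<in>{i. i + 4 < t \<and> (s i, s (i + 4)) \<in> bad_pairs F K a b G}.
          j = i \<or> j + 4 = i \<or> j = i + 4 \<or> j = i + 8" by blast
qed

lemma prefixes_strict_chain:
  assumes xs: "xs \<in> permutations_of_set S" and sorted: "sorted_wrt (<) ks"
    and ks: "set ks \<subseteq> {..card S}" and ii': "i < i'" "i' < length ks"
  shows "set (take (ks ! i) xs) \<subset> set (take (ks ! i') xs) \<and>
         card (set (take (ks ! i) xs)) + (i' - i) \<le> card (set (take (ks ! i') xs))"
proof -
  have lt: "ks ! i < ks ! i'" using sorted ii' sorted_wrt_nth_less by blast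
  have "ks ! i \<in> set ks" "ks ! i' \<in> set ks" using ii' by auto
  hence cards: "card (set (take (ks ! i) xs)) = ks ! i" "card (set (take (ks ! i') xs)) = ks ! i'"
    using ks card_set_take_permutation[OF xs] by auto
  have "set (take (ks ! i) xs) \<subseteq> set (take (ks ! i') xs)"
    using lt by (simp add: set_take_subset_set_take)
  moreover have "ks ! i + (i' - i) \<le> ks ! i'"
    using sorted_wrt_less_nth_add_le[OF sorted, of i i'] ii' by simp
  ultimately show ?thesis using cards lt by auto
qed

lemma card_prefixes_le_bad_pairs:
  assumes xs: "xs \<in> permutations_of_set S" and G: "G \<subseteq> F"
    and not_good: "\<forall>X\<in>G. \<not> good_root F K a b X" and a: "a \<le> 2" and b: "b \<le> 2"
  shows "card {k. k \<le> card S \<and> set (take k xs) \<in> G}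
     \<le> 4 * (a + b) + 4 * card {(k, k'). k \<le> card S \<and> k' \<le> card S \<and>
                              (set (take k xs), set (take k' xs)) \<in> bad_pairs F K a b G}"
proof -
  let ?pre = "\<lambda>k. set (take k xs)"
  let ?Pos = "{k. k \<le> card S \<and> ?pre k \<in> G}"
  let ?BadPos = "{(k, k'). k \<le> card S \<and> k' \<le> card S \<and> (?pre k, ?pre k') \<in> bad_pairs F K a b G}"
  define ks where "ks = sorted_list_of_set ?Pos"
  have "finite ?Pos" by (rule finite_subset[of _ "{..card S}"]) auto
  hence sorted: "sorted_wrt (<) ks" and set_ks: "set ks = ?Pos" unfolding ks_def by auto
  let ?I = "{i. i + 4 < length ks \<and> (?pre (ks ! i), ?pre (ks ! (i + 4))) \<in> bad_pairs F K a b G}"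
  have "set ks \<subseteq> {..card S}" using set_ks by auto
  hence "length ks \<le> 4 * (a + b) + 4 * card ?I"
    using set_ks prefixes_strict_chain[OF xs sorted] not_good a b
    by (intro chain_length_le_bad_pairs[OF G]) auto
  moreover have "card ?I \<le> card ?BadPos"
  proof (rule card_inj_on_le[where f = "\<lambda>i. (ks ! i, ks ! (i + 4))"])
    have "distinct ks" using sorted strict_sorted_iff by blast
    thus "inj_on (\<lambda>i. (ks ! i, ks ! (i + 4))) ?I"
      by (intro inj_onI) (simp add: nth_eq_iff_index_eq)
    have "ks ! i \<le> card S" if "i < length ks" for i using that set_ks nth_mem by fastforce
    thus "(\<lambda>i. (ks ! i, ks ! (i + 4))) ` ?I \<subseteq> ?BadPos" by auto
    show "finite ?BadPos" by (rule finite_subset[of _ "{..card S} \<times> {..card S}"]) auto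
  qed
  moreover have "length ks = card ?Pos"
    using set_ks distinct_card[of ks] sorted strict_sorted_iff by metis
  ultimately show ?thesis by linarith
qed

text \<open>The numbers of maximal chains of \<open>2^[n]\<close> through \<open>A\<close>, and through both \<open>A \<subseteq> B\<close>.\<close>
definition lym_weight :: "nat \<Rightarrow> 'b set \<Rightarrow> nat" where
  "lym_weight n A = fact (card A) * fact (n - card A)"

definition pair_weight :: "nat \<Rightarrow> 'b set \<Rightarrow> 'b set \<Rightarrow> nat" where
  "pair_weight n A B = fact (card A) * fact (card B - card A) * fact (n - card B)"

lemma fact_le_lym_weight:
  assumes "card A \<le> n"
  shows "fact n \<le> lym_weight n A * (n choose (n div 2))"
proof -
  have "fact n = lym_weight n A * (n choose card A)"
    using binomial_fact_lemma[OF assms] unfolding lym_weight_def by (simp add: algebra_simps)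
  also have "\<dots> \<le> lym_weight n A * (n choose (n div 2))"
    by (intro mult_left_mono binomial_maximum) simp
  finally show ?thesis .
qed

lemma pair_weight_le_lower:
  assumes "16 \<le> n" "card A + 4 \<le> card B" "4 * card B \<le> 3 * n"
  shows "((n div 4) choose 4) * pair_weight n A B \<le> lym_weight n A"
proof -
  have "((n div 4) choose 4) * (fact (card B - card A) * fact (n - card B))
      \<le> fact ((card B - card A) + (n - card B))"
    using assms by (intro choose_4_mult_fact_le) auto
  also have "(card B - card A) + (n - card B) = n - card A" using assms by linarith
  finally have "fact (card A) * (((n div 4) choose 4) * (fact (card B - card A) * fact (n - card B)))
      \<le> fact (card A) * fact (n - card A)" by (rule mult_le_mono2)
  thus ?thesis unfolding pair_weight_def lym_weight_def by (simp only: ac_simps)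
qed

lemma pair_weight_le_upper:
  assumes "16 \<le> n" "card A + 4 \<le> card B" "n \<le> 4 * card A"
  shows "((n div 4) choose 4) * pair_weight n A B \<le> lym_weight n B"
proof -
  have "((n div 4) choose 4) * (fact (card B - card A) * fact (card A))
      \<le> fact ((card B - card A) + card A)"
    using assms by (intro choose_4_mult_fact_le) auto
  also have "(card B - card A) + card A = card B" using assms by linarith
  finally have "fact (n - card B) * (((n div 4) choose 4) * (fact (card B - card A) * fact (card A)))
      \<le> fact (n - card B) * fact (card B)" by (rule mult_le_mono2)
  thus ?thesis unfolding pair_weight_def lym_weight_def by (simp only: ac_simps)
qed

lemma sum_le_by_fibres:
  fixes w :: "'a \<Rightarrow> nat" and c :: "'b \<Rightarrow> nat"
  assumes R: "finite R" "f ` R \<subseteq> G" and G: "finite G"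
    and fibres: "\<And>y. card {p\<in>R. f p = y} \<le> K"
    and weights: "\<And>p. p \<in> R \<Longrightarrow> M * w p \<le> c (f p)"
  shows "M * sum w R \<le> K * sum c G"
proof -
  have "M * sum w R = M * (\<Sum>y\<in>G. sum w {p\<in>R. f p = y})"
    using sum.group[OF R(1) G R(2), of w] by simp
  also have "\<dots> = (\<Sum>y\<in>G. M * sum w {p\<in>R. f p = y})" by (rule sum_distrib_left)
  also have "\<dots> \<le> (\<Sum>y\<in>G. K * c y)"
  proof (rule sum_mono)
    fix y
    have "M * sum w {p\<in>R. f p = y} = (\<Sum>p\<in>{p\<in>R. f p = y}. M * w p)" by (rule sum_distrib_left)
    also have "\<dots> \<le> (\<Sum>p\<in>{p\<in>R. f p = y}. c y)"
    proof (rule sum_mono)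
      fix p assume "p \<in> {p\<in>R. f p = y}"
      thus "M * w p \<le> c y" using weights[of p] by simp
    qed
    also have "\<dots> = card {p\<in>R. f p = y} * c y" by simp
    also have "\<dots> \<le> K * c y" using fibres[of y] by (rule mult_right_mono) simp
    finally show "M * sum w {p\<in>R. f p = y} \<le> K * c y" .
  qed
  also have "\<dots> = K * sum c G" by (rule sum_distrib_left[symmetric])
  finally show ?thesis .
qed

lemma card_fst_fibre: "card {p\<in>R. fst p = A} = card {B. (A, B) \<in> R}"
proof -
  have "{p\<in>R. fst p = A} = Pair A ` {B. (A, B) \<in> R}" by force
  moreover have "inj_on (Pair A) {B. (A, B) \<in> R}" by (simp add: inj_on_def)
  ultimately show ?thesis by (simp add: card_image)
qed

lemma card_snd_fibre: "card {p\<in>R. snd p = B} = card {A. (A, B) \<in> R}"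
proof -
  have "{p\<in>R. snd p = B} = (\<lambda>A. (A, B)) ` {A. (A, B) \<in> R}" by force
  moreover have "inj_on (\<lambda>A. (A, B)) {A. (A, B) \<in> R}" by (simp add: inj_on_def)
  ultimately show ?thesis by (simp add: card_image)
qed

lemma bad_pairsD:
  "(A, B) \<in> bad_pairs F K a b G \<Longrightarrow> A \<in> G \<and> B \<in> G \<and> A \<subset> B \<and> card A + 4 \<le> card B"
  unfolding bad_pairs_def by auto

lemma finite_bad_pairs: "finite G \<Longrightarrow> finite (bad_pairs F K a b G)"
  by (rule finite_subset[of _ "G \<times> G"]) (auto simp: bad_pairs_def)

lemma bad_above_weight_le:
  assumes F: "finite F" and G: "G \<subseteq> F" and n: "16 \<le> n"
    and balanced: "\<And>A. A \<in> G \<Longrightarrow> n \<le> 4 * card A \<and> 4 * card A \<le> 3 * n"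
  shows "((n div 4) choose 4) * (\<Sum>(A, B)\<in>{(A, B) \<in> bad_pairs F K a b G. bad_above F K a A B}.
            pair_weight n A B) \<le> K * sum (lym_weight n) G"
proof (rule sum_le_by_fibres[where f = fst])
  let ?R = "{(A, B) \<in> bad_pairs F K a b G. bad_above F K a A B}"
  show fin: "finite G" using finite_subset[OF G F] .
  have "?R \<subseteq> bad_pairs F K a b G" by auto
  thus "finite ?R" using finite_subset[OF _ finite_bad_pairs[OF fin]] by blast
  show "fst ` ?R \<subseteq> G" using bad_pairsD[of _ _ F K a b G] by auto
  fix A
  have "{B. (A, B) \<in> ?R} \<subseteq> {B\<in>F. A \<subset> B \<and> bad_above F K a A B}"
    using G bad_pairsD[of A _ F K a b G] by auto
  from card_mono[OF _ this] have "card {B. (A, B) \<in> ?R} \<le> K"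
    using card_bad_above_le[OF F, of A K a] F by simp
  thus "card {p\<in>?R. fst p = A} \<le> K" by (simp only: card_fst_fibre)
next
  fix p assume "p \<in> {(A, B) \<in> bad_pairs F K a b G. bad_above F K a A B}"
  then obtain A B where p: "p = (A, B)" "(A, B) \<in> bad_pairs F K a b G" by auto
  from bad_pairsD[OF p(2)] have AB: "A \<in> G" "B \<in> G" "card A + 4 \<le> card B" by auto
  thus "((n div 4) choose 4) * (case p of (A, B) \<Rightarrow> pair_weight n A B) \<le> lym_weight n (fst p)"
    using p(1) pair_weight_le_lower[OF n AB(3)] balanced[OF AB(2)] by simp
qed

lemma bad_below_weight_le:
  assumes F: "finite F" and G: "G \<subseteq> F" and n: "16 \<le> n"
    and balanced: "\<And>A. A \<in> G \<Longrightarrow> n \<le> 4 * card A \<and> 4 * card A \<le> 3 * n"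
  shows "((n div 4) choose 4) * (\<Sum>(A, B)\<in>{(A, B) \<in> bad_pairs F K a b G. bad_below F K b A B}.
            pair_weight n A B) \<le> K * sum (lym_weight n) G"
proof (rule sum_le_by_fibres[where f = snd])
  let ?R = "{(A, B) \<in> bad_pairs F K a b G. bad_below F K b A B}"
  show fin: "finite G" using finite_subset[OF G F] .
  have "?R \<subseteq> bad_pairs F K a b G" by auto
  thus "finite ?R" using finite_subset[OF _ finite_bad_pairs[OF fin]] by blast
  show "snd ` ?R \<subseteq> G" using bad_pairsD[of _ _ F K a b G] by auto
  fix B
  have "{A. (A, B) \<in> ?R} \<subseteq> {A\<in>F. A \<subset> B \<and> bad_below F K b A B}"
    using G bad_pairsD[of _ B F K a b G] by auto
  from card_mono[OF _ this] have "card {A. (A, B) \<in> ?R} \<le> K"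
    using card_bad_below_le[OF F, of B K b] F by simp
  thus "card {p\<in>?R. snd p = B} \<le> K" by (simp only: card_snd_fibre)
next
  fix p assume "p \<in> {(A, B) \<in> bad_pairs F K a b G. bad_below F K b A B}"
  then obtain A B where p: "p = (A, B)" "(A, B) \<in> bad_pairs F K a b G" by auto
  from bad_pairsD[OF p(2)] have AB: "A \<in> G" "B \<in> G" "card A + 4 \<le> card B" by auto
  thus "((n div 4) choose 4) * (case p of (A, B) \<Rightarrow> pair_weight n A B) \<le> lym_weight n (snd p)"
    using p(1) pair_weight_le_upper[OF n AB(3)] balanced[OF AB(1)] by simp
qed

lemma bad_pairs_weight_le:
  assumes F: "finite F" and G: "G \<subseteq> F" and n: "16 \<le> n"
    and balanced: "\<And>A. A \<in> G \<Longrightarrow> n \<le> 4 * card A \<and> 4 * card A \<le> 3 * n"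
  shows "((n div 4) choose 4) * (\<Sum>(A, B)\<in>bad_pairs F K a b G. pair_weight n A B)
      \<le> 2 * K * sum (lym_weight n) G"
proof -
  let ?w = "\<lambda>(A, B). pair_weight n A B"
  let ?Ra = "{(A, B) \<in> bad_pairs F K a b G. bad_above F K a A B}"
  let ?Rb = "{(A, B) \<in> bad_pairs F K a b G. bad_below F K b A B}"
  have "finite (bad_pairs F K a b G)" using finite_bad_pairs[OF finite_subset[OF G F]] .
  moreover have "?Ra \<subseteq> bad_pairs F K a b G" "?Rb \<subseteq> bad_pairs F K a b G" by auto
  ultimately have fin: "finite ?Ra" "finite ?Rb" using finite_subset[of _ "bad_pairs F K a b G"] by blast+
  have "bad_pairs F K a b G = ?Ra \<union> ?Rb" unfolding bad_pairs_def by auto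
  hence "sum ?w (bad_pairs F K a b G) = sum ?w ?Ra + sum ?w ?Rb - sum ?w (?Ra \<inter> ?Rb)"
    using sum_Un_nat[OF fin, of ?w] by simp
  hence "sum ?w (bad_pairs F K a b G) \<le> sum ?w ?Ra + sum ?w ?Rb" by linarith
  hence "((n div 4) choose 4) * sum ?w (bad_pairs F K a b G)
      \<le> ((n div 4) choose 4) * (sum ?w ?Ra + sum ?w ?Rb)" by (rule mult_le_mono2)
  hence "((n div 4) choose 4) * sum ?w (bad_pairs F K a b G)
      \<le> ((n div 4) choose 4) * sum ?w ?Ra + ((n div 4) choose 4) * sum ?w ?Rb"
    by (simp only: add_mult_distrib2)
  moreover have "((n div 4) choose 4) * sum ?w ?Ra \<le> K * sum (lym_weight n) G"
    by (rule bad_above_weight_le[OF F G n balanced])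
  moreover have "((n div 4) choose 4) * sum ?w ?Rb \<le> K * sum (lym_weight n) G"
    by (rule bad_below_weight_le[OF F G n balanced])
  ultimately show ?thesis by linarith
qed

section \<open>Balanced sets and good roots\<close>

text \<open>Each member of \<open>G\<close> on a maximal chain is counted once and each bad pair on it at most
  four times; summing over the \<open>n!\<close> maximal chains gives LYM-type weights.\<close>
lemma sum_lym_weight_le_bad_pairs:
  assumes G: "G \<subseteq> F" "G \<subseteq> Pow {1..n}"
    and not_good: "\<forall>X\<in>G. \<not> good_root F K a b X" and a: "a \<le> 2" and b: "b \<le> 2"
  shows "sum (lym_weight n) G
      \<le> 4 * (a + b) * fact n + 4 * (\<Sum>(A, B)\<in>bad_pairs F K a b G. pair_weight n A B)"
proof -
  let ?\<Pi> = "permutations_of_set {1..n}" and ?bad = "bad_pairs F K a b G"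
  have bad_sub: "?bad \<subseteq> {(A, B). A \<subseteq> B \<and> B \<subseteq> {1..n}}"
    using G(2) unfolding bad_pairs_def by auto
  have "sum (lym_weight n) G = (\<Sum>xs\<in>?\<Pi>. card {k. k \<le> n \<and> set (take k xs) \<in> G})"
    using sum_card_prefixes[OF _ G(2)] unfolding lym_weight_def by simp
  also have "\<dots> \<le> (\<Sum>xs\<in>?\<Pi>. 4 * (a + b) + 4 * card {(k, k'). k \<le> n \<and> k' \<le> n \<and>
                               (set (take k xs), set (take k' xs)) \<in> ?bad})"
  proof (rule sum_mono)
    fix xs assume "xs \<in> ?\<Pi>"
    from card_prefixes_le_bad_pairs[OF this G(1) not_good a b]
    show "card {k. k \<le> n \<and> set (take k xs) \<in> G} \<le> 4 * (a + b) + 4 * card {(k, k'). k \<le> n \<and>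
        k' \<le> n \<and> (set (take k xs), set (take k' xs)) \<in> ?bad}" by simp
  qed
  also have "\<dots> = 4 * (a + b) * fact n + 4 * (\<Sum>(A, B)\<in>?bad. pair_weight n A B)"
    using sum_card_prefix_pairs[OF _ bad_sub]
    by (simp add: sum.distrib sum_distrib_left[symmetric] pair_weight_def case_prod_unfold)
  finally show ?thesis .
qed

lemma card_mult_fact_le_sum_lym_weight:
  assumes "G \<subseteq> Pow {1..n}"
  shows "card G * fact n \<le> sum (lym_weight n) G * (n choose (n div 2))"
proof -
  have "card G * fact n = (\<Sum>A\<in>G. fact n)" by simp
  also have "\<dots> \<le> (\<Sum>A\<in>G. lym_weight n A * (n choose (n div 2)))"
  proof (rule sum_mono)
    fix A assume "A \<in> G"
    hence "card A \<le> n" using assms card_mono[of "{1..n}" A] by auto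
    thus "fact n \<le> lym_weight n A * (n choose (n div 2))" by (rule fact_le_lym_weight)
  qed
  also have "\<dots> = sum (lym_weight n) G * (n choose (n div 2))" by (rule sum_distrib_right[symmetric])
  finally show ?thesis .
qed

lemma card_balanced_le_if_no_good_root:
  fixes F :: "nat set set"
  assumes F: "F \<subseteq> Pow {1..n}" and n: "16 \<le> n" and a: "a \<le> 2" and b: "b \<le> 2"
    and not_good: "\<forall>X\<in>F - unbalanced_sets n. \<not> good_root F K a b X"
  shows "card (F - unbalanced_sets n) * (((n div 4) choose 4) - 8 * K)
       \<le> 4 * (a + b) * (n choose (n div 2)) * ((n div 4) choose 4)"
proof -
  let ?G = "F - unbalanced_sets n" and ?M = "(n div 4) choose 4" and ?C = "n choose (n div 2)"
  define \<Lambda> where "\<Lambda> = sum (lym_weight n) ?G"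
  define W where "W = (\<Sum>(A, B)\<in>bad_pairs F K a b ?G. pair_weight n A B)"
  have G: "?G \<subseteq> F" "?G \<subseteq> Pow {1..n}" using F by auto
  have fin: "finite F" using F by (rule finite_subset) simp
  have balanced: "n \<le> 4 * card A \<and> 4 * card A \<le> 3 * n" if "A \<in> ?G" for A
    using that F unfolding unbalanced_sets_def by auto
  have "?M * \<Lambda> \<le> 4 * (a + b) * fact n * ?M + 4 * (?M * W)"
    using mult_le_mono2[OF sum_lym_weight_le_bad_pairs[OF G not_good a b], of ?M]
    unfolding \<Lambda>_def W_def by (simp add: algebra_simps)
  also have "\<dots> \<le> 4 * (a + b) * fact n * ?M + 8 * K * \<Lambda>"
    using mult_le_mono2[OF bad_pairs_weight_le[OF fin G(1) n balanced], of 4]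
    unfolding \<Lambda>_def W_def by (simp add: algebra_simps)
  finally have key: "(?M - 8 * K) * \<Lambda> \<le> 4 * (a + b) * fact n * ?M"
    by (simp add: diff_mult_distrib)
  have "card ?G * fact n * (?M - 8 * K) \<le> \<Lambda> * ?C * (?M - 8 * K)"
    using card_mult_fact_le_sum_lym_weight[OF G(2)] unfolding \<Lambda>_def by (rule mult_le_mono1)
  also have "\<dots> = (?M - 8 * K) * \<Lambda> * ?C" by (simp only: ac_simps)
  also have "\<dots> \<le> 4 * (a + b) * fact n * ?M * ?C" using key by (rule mult_le_mono1)
  finally have "fact n * (card ?G * (?M - 8 * K)) \<le> fact n * (4 * (a + b) * ?C * ?M)"
    by (simp only: ac_simps)
  thus ?thesis by (simp only: mult_le_cancel1) simp
qed

lemma exists_good_root: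
  fixes F :: "nat set set" and e :: real
  assumes F: "F \<subseteq> Pow {1..n}" and n: "16 \<le> n" and a: "a \<le> 2" and b: "b \<le> 2"
    and e: "0 < e" "e \<le> 1"
    and tail: "real (n + 1) \<le> e * 2 ^ (n div 3 - n div 4)"
    and K: "64 * real K \<le> e * real ((n div 4) choose 4)"
    and dense: "4 * (real (a + b) + e) * real (n choose (n div 2)) \<le> real (card F)"
  shows "\<exists>X\<in>F. good_root F K a b X"
proof (rule ccontr)
  assume "\<not> ?thesis"
  hence no_good: "\<forall>X\<in>F - unbalanced_sets n. \<not> good_root F K a b X" by blast
  let ?G = "F - unbalanced_sets n" and ?C = "n choose (n div 2)" and ?M = "(n div 4) choose 4"
  define s where "s = real (a + b)"
  have s: "0 \<le> s" "s \<le> 4" using a b unfolding s_def by auto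
  have C: "real ?C > 0" by simp
  have M: "real ?M > 0" using n by simp
  have "2 ^ (n div 3 - n div 4) * real (card (unbalanced_sets n)) \<le> real (n + 1) * real ?C"
    using card_unbalanced_sets_le[of n] by (metis of_nat_le_iff of_nat_mult of_nat_numeral of_nat_power)
  also have "\<dots> \<le> 2 ^ (n div 3 - n div 4) * (e * real ?C)"
    using mult_right_mono[OF tail, of "real ?C"] by (simp add: algebra_simps)
  finally have U: "real (card (unbalanced_sets n)) \<le> e * real ?C" by simp
  have "finite (unbalanced_sets n)"
    by (rule finite_subset[of _ "Pow {1..n}"]) (auto simp: unbalanced_sets_def)
  hence "card F \<le> card ?G + card (unbalanced_sets n)"
    using card_mono[of "?G \<union> unbalanced_sets n" F] card_Un_le[of ?G "unbalanced_sets n"]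
      finite_subset[OF F] by fastforce
  hence G: "(4 * s + 3 * e) * real ?C \<le> real (card ?G)"
    using dense U unfolding s_def by (simp add: algebra_simps)
  have "e * real ?M \<le> real ?M" using e M by (intro mult_left_le_one_le) auto
  hence "real (8 * K) \<le> real ?M" using K by simp
  hence "8 * K \<le> ?M" by (simp only: of_nat_le_iff)
  hence "(1 - e / 8) * real ?M \<le> real (?M - 8 * K)" using K by (simp add: of_nat_diff algebra_simps)
  hence "(4 * s + 3 * e) * real ?C * ((1 - e / 8) * real ?M) \<le> real (card ?G) * real (?M - 8 * K)"
    using G s e C M by (intro mult_mono) auto
  also have "\<dots> \<le> 4 * s * real ?C * real ?M"
    using card_balanced_le_if_no_good_root[OF F n a b no_good] unfolding s_def
    by (metis (mono_tags, lifting) of_nat_le_iff of_nat_mult of_nat_numeral)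
  finally have "((4 * s + 3 * e) * (1 - e / 8)) * (real ?C * real ?M) \<le> (4 * s) * (real ?C * real ?M)"
    by (simp add: algebra_simps)
  hence le: "(4 * s + 3 * e) * (1 - e / 8) \<le> 4 * s" using C M by simp
  have "(4 * s + 3 * e) * e < 24 * e" using s e by (intro mult_strict_right_mono) auto
  thus False using le by (simp add: algebra_simps)
qed

lemma one_le_nat_floor_powr:
  assumes "1 \<le> n" "0 \<le> p"
  shows "1 \<le> nat \<lfloor>real n powr p\<rfloor>"
proof -
  have "1 \<le> real n powr p" using assms by (intro ge_one_powr_ge_zero) auto
  thus ?thesis by linarith
qed

lemma (in rooted_tree_poset) card_blowup_elems_le_powr:
  assumes "\<forall>y\<in>P. depth y \<le> 2" "1 \<le> n"
  shows "real (card (blowup_elems P x (nat \<lfloor>real n powr 1.9\<rfloor>))) \<le> real (card P) * (real n powr 1.9) ^ 2"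
proof -
  let ?d = "nat \<lfloor>real n powr 1.9\<rfloor>"
  have d: "1 \<le> ?d" using one_le_nat_floor_powr[OF assms(2)] by simp
  have "0 \<le> \<lfloor>real n powr 1.9\<rfloor>" by simp
  hence "real ?d \<le> real n powr 1.9" by (simp add: of_int_floor_le)
  have "real (card (blowup_elems P x ?d)) \<le> real (card P) * real ?d ^ 2"
    using card_blowup_elems_le[OF assms(1) d] by (metis of_nat_le_iff of_nat_mult of_nat_power)
  also have "\<dots> \<le> real (card P) * (real n powr 1.9) ^ 2"
    using \<open>real ?d \<le> real n powr 1.9\<close> by (intro mult_left_mono power_mono) auto
  finally show ?thesis .
qed

lemma (in rooted_tree_poset) contains_blowup_if_dense:
  fixes F :: "nat set set" and e :: real
  assumes near: "\<forall>y\<in>P. depth y \<le> 2" and F: "F \<subseteq> Pow {1..n}" and n: "16 \<le> n" and d: "1 \<le> d"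
    and e: "0 < e" "e \<le> 1"
    and tail: "real (n + 1) \<le> e * 2 ^ (n div 3 - n div 4)"
    and K: "64 * real (card (blowup_elems P x d)) \<le> e * real ((n div 4) choose 4)"
    and dense: "4 * (real (height P) - 1 + e) * real (n choose (n div 2)) \<le> real (card F)"
  shows "contains_blowup F P x d"
proof -
  let ?a = "levels_above P x" and ?b = "levels_below P x"
  have "real (?a + ?b) \<le> real (height P) - 1"
    using levels_above_below_le_height[OF finite_P root_in] by linarith
  hence "4 * (real (?a + ?b) + e) * real (n choose (n div 2)) \<le> real (card F)"
    using dense by (smt (verit) mult_right_mono of_nat_0_le_iff)
  then obtain X where "X \<in> F" "good_root F (card (blowup_elems P x d)) ?a ?b X"
    using exists_good_root[OF F n levels_above_le_2 levels_below_le_2 e tail K] by blast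
  moreover have "finite F" using F by (rule finite_subset) simp
  ultimately interpret good_root_embedding P x F d X
    using near d by unfold_locales auto
  show ?thesis by (rule contains_blowup)
qed

theorem lemma1p9:
  fixes P :: "'a set set" and x :: "'a set"
  assumes "finite P" and "\<forall>A\<in>P. finite A"
    and "tree_poset P" and "height P \<le> 5" and "radius_le P 2"
    and "x \<in> P" and "\<forall>y\<in>P. hdist_le P x y 2"
  shows "\<forall>\<epsilon>::real. \<epsilon> > 0 \<longrightarrow> (\<exists>N::nat. \<forall>n\<ge>N. \<forall>F :: nat set set.
           F \<subseteq> Pow {1..n} \<and>
           real (card F) \<ge> 4 * (real (height P) - 1 + \<epsilon>) * real (n choose (n div 2))
           \<longrightarrow> contains_blowup F P x (nat \<lfloor>real n powr 1.9\<rfloor>))"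
proof (intro allI impI)
  fix \<epsilon> :: real assume "\<epsilon> > 0"
  interpret rooted_tree_poset P x using assms by unfold_locales
  have near: "\<forall>y\<in>P. depth y \<le> 2" using assms(7) hdist_le_2 by blast
  define e where "e = min \<epsilon> 1"
  have e: "0 < e" "e \<le> 1" "e \<le> \<epsilon>" using \<open>\<epsilon> > 0\<close> unfolding e_def by auto
  obtain N where N: "\<And>n. N \<le> n \<Longrightarrow> 16 \<le> n \<and> real (n + 1) \<le> e * 2 ^ (n div 3 - n div 4) \<and>
      64 * real (card P) * (real n powr 1.9) ^ 2 \<le> e * real ((n div 4) choose 4)"
    using eventually_conj[OF eventually_ge_at_top eventually_conj[OF eventually_linear_le_pow2[OF e(1)]
        eventually_powr_le_choose_4[OF e(1)]]] unfolding eventually_sequentially by blast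
  have "contains_blowup F P x (nat \<lfloor>real n powr 1.9\<rfloor>)"
    if "N \<le> n" "F \<subseteq> Pow {1..n}"
      and dense: "4 * (real (height P) - 1 + \<epsilon>) * real (n choose (n div 2)) \<le> real (card F)" for n F
  proof (rule contains_blowup_if_dense[OF near \<open>F \<subseteq> Pow {1..n}\<close> _ _ e(1,2)])
    show "1 \<le> nat \<lfloor>real n powr 1.9\<rfloor>" using N[OF that(1)] by (intro one_le_nat_floor_powr) auto
    show "64 * real (card (blowup_elems P x (nat \<lfloor>real n powr 1.9\<rfloor>))) \<le> e * real ((n div 4) choose 4)"
      using card_blowup_elems_le_powr[OF near, of n] N[OF that(1)] by linarith
    show "4 * (real (height P) - 1 + e) * real (n choose (n div 2)) \<le> real (card F)"
      using dense e(3) by (smt (verit) mult_right_mono of_nat_0_le_iff)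
  qed (use N[OF that(1)] in auto)
  thus "\<exists>N. \<forall>n\<ge>N. \<forall>F. F \<subseteq> Pow {1..n} \<and>
      4 * (real (height P) - 1 + \<epsilon>) * real (n choose (n div 2)) \<le> real (card F)
      \<longrightarrow> contains_blowup F P x (nat \<lfloor>real n powr 1.9\<rfloor>)" by blast
qed

end
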